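(* Let $e[r]$ be an affine function of $r$ with $e[1]>0$ and $e[-1]>0$. The set $\pi(U)$ is bounded by a constant depending only on $e$ and the dimension $n$. Moreover, for every $z\in\overline U\setminus K$ there exists $\bar z\in\Lambda\setminus\{0\}$ such that $z\pm\bar z\in\overline U$.
   Context: Let $n\ge2$, $\mathcal S_0^{n\times n}$ the trace-free symmetric matrices, $Z:=\mathbb{R}\times\mathbb{R}^n\times\mathbb{R}^n\times\mathcal S_0^{n\times n}\times\mathbb{R}$ with elements $z=(\rho,v,m,\sigma,p)$, $\pi(z):=(\rho,v,m,\sigma)$. $K:=\{z:\rho\in\{\pm1\},m=\rho v,v\otimes v-\sigma=e[\rho]\mathrm{Id}\}$. For $\rho\in(-1,1)$: $M(z)=\frac{v\otimes v-\rho(m\otimes v+v\otimes m)+m\otimes m}{1-\rho^2}-\sigma$, $Q(z)=\lambda_{\max}(M(z))$, $T_\pm(z)=\frac{|m\pm v|^2}{n(\rho\pm1)^2}$; $U:=\{z:\rho\in(-1,1),T_\pm(z)<e[\pm1],Q(z)<e[\rho]\}$. Wave cone: $M_\Lambda(\bar z):=\begin{pmatrix}\bar\sigma+\bar p\,\mathrm{Id}&\bar v\\ \bar v^T&0\\ \bar m^T&\bar\rho\end{pmatrix}$, $\Lambda:=\{\bar z:\ker M_\Lambda(\bar z)\ne\{0\},(\bar\rho,\bar v)\ne0\}$. *)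

theory Defs
  imports "HOL-Analysis.Analysis"
begin

text \<open>State space Z = R x R^n x R^n x S_0^{n x n} x R. Elements are tuples
  (rho, v, m, sigma, p); the constraint that sigma is symmetric and trace-free
  is expressed by the carrier set Zset.\<close>

type_synonym 'n state = "real \<times> (real^'n) \<times> (real^'n) \<times> (real^'n^'n) \<times> real"

definition Zset :: "'n::finite state set" where
  "Zset = {(\<rho>, v, m, \<sigma>, p). transpose \<sigma> = \<sigma> \<and> trace \<sigma> = 0}"

definition proj :: "'n::finite state \<Rightarrow> real \<times> (real^'n) \<times> (real^'n) \<times> (real^'n^'n)" where
  "proj z = (case z of (\<rho>, v, m, \<sigma>, p) \<Rightarrow> (\<rho>, v, m, \<sigma>))"

definition outer :: "real^'n \<Rightarrow> real^'n \<Rightarrow> real^'n^'n" where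
  "outer a b = (\<chi> i j. a $ i * b $ j)"

definition lambda_max :: "real^'n^'n \<Rightarrow> real" where
  "lambda_max A = Max {c. \<exists>x. x \<noteq> 0 \<and> A *v x = c *\<^sub>R x}"

definition Kset :: "(real \<Rightarrow> real) \<Rightarrow> 'n::finite state set" where
  "Kset e = {z \<in> Zset. case z of (\<rho>, v, m, \<sigma>, p) \<Rightarrow>
      (\<rho> = 1 \<or> \<rho> = -1) \<and> m = \<rho> *\<^sub>R v \<and> outer v v - \<sigma> = e \<rho> *\<^sub>R mat 1}"

definition Mmat :: "'n::finite state \<Rightarrow> real^'n^'n" where
  "Mmat z = (case z of (\<rho>, v, m, \<sigma>, p) \<Rightarrow>
      (1 / (1 - \<rho>^2)) *\<^sub>R (outer v v - \<rho> *\<^sub>R (outer m v + outer v m) + outer m m) - \<sigma>)"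

definition Qf :: "'n::finite state \<Rightarrow> real" where
  "Qf z = lambda_max (Mmat z)"

definition Tplus :: "'n::finite state \<Rightarrow> real" where
  "Tplus z = (case z of (\<rho>, v, m, \<sigma>, p) \<Rightarrow>
      (norm (m + v))^2 / (real CARD('n) * (\<rho> + 1)^2))"

definition Tminus :: "'n::finite state \<Rightarrow> real" where
  "Tminus z = (case z of (\<rho>, v, m, \<sigma>, p) \<Rightarrow>
      (norm (m - v))^2 / (real CARD('n) * (\<rho> - 1)^2))"

definition Uset :: "(real \<Rightarrow> real) \<Rightarrow> 'n::finite state set" where
  "Uset e = {z \<in> Zset. case z of (\<rho>, v, m, \<sigma>, p) \<Rightarrow>
      -1 < \<rho> \<and> \<rho> < 1 \<and> Tplus z < e 1 \<and> Tminus z < e (-1) \<and> Qf z < e \<rho>}"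

text \<open>Wave cone: zbar in Z with (rhobar, vbar) nonzero and ker M_Lambda(zbar) nontrivial,
  where M_Lambda(zbar) is the (n+2) x (n+1) matrix
  [[sigma + p Id, v], [v^T, 0], [m^T, rho]] acting on (x, t) in R^n x R.\<close>
definition Lambda :: "'n::finite state set" where
  "Lambda = {z \<in> Zset. case z of (\<rho>, v, m, \<sigma>, p) \<Rightarrow>
      (\<exists>x t. (x, t) \<noteq> (0, 0) \<and>
         (\<sigma> + p *\<^sub>R mat 1) *v x + t *\<^sub>R v = 0 \<and>
         v \<bullet> x = 0 \<and>
         m \<bullet> x + \<rho> * t = 0)
      \<and> (\<rho>, v) \<noteq> (0, 0)}"

end

theory Submission
  imports Defs
begin

text \<open>The closure of \<open>U\<close> is the set \<open>Ubar\<close> obtained by relaxing the strict inequalities, with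
  \<open>Q z \<le> e \<rho>\<close> rewritten as a family of inequalities affine in \<open>z\<close>. It is closed, contains \<open>U\<close>,
  and every point of it is the limit of the points \<open>c z \<in> U\<close>, \<open>c \<up> 1\<close>, because \<open>e\<close> is affine with
  \<open>e 0 > 0\<close>. On \<open>Ubar\<close> we have \<open>\<sigma> \<ge> - max (e 1) (e (-1)) Id\<close> and \<open>trace \<sigma> = 0\<close>, which bounds \<open>\<sigma>\<close>,
  while the cone conditions bound \<open>m \<plusminus> v\<close>.

  For \<open>z \<in> Ubar - K\<close> consider the positive semidefinite defect matrix \<open>P = e \<rho> Id - M z\<close>. If
  \<open>P \<noteq> 0\<close>, its trace is positive, so one of the two cone conditions is strict; then \<open>m\<close> and \<open>v\<close> can
  be moved in the direction \<open>P u\<close>, for \<open>u\<close> orthogonal to an eigenvector of \<open>P\<close>, with a trace-free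
  correction of \<open>\<sigma>\<close> that keeps \<open>P\<close> semidefinite, and the eigenvector spans the kernel required for
  the wave cone. If \<open>P = 0\<close> and \<open>z \<notin> K\<close>, then \<open>-1 < \<rho> < 1\<close>, and \<open>z\<close> can be moved in \<open>\<rho>\<close> keeping
  \<open>(m \<plusminus> v) / (1 \<plusminus> \<rho>)\<close> fixed, which keeps \<open>P = 0\<close>.\<close>

section \<open>Symmetric matrices\<close>

lemma outer_mult_vec: "outer a b *v x = (b \<bullet> x) *\<^sub>R a"
  by (simp add: vec_eq_iff outer_def matrix_vector_mult_def inner_vec_def sum_distrib_left mult_ac)

lemma inner_outer_self: "x \<bullet> (outer a a *v x) = (a \<bullet> x)\<^sup>2"
  by (simp add: outer_mult_vec power2_eq_square inner_commute)

lemma transpose_outer: "transpose (outer a b) = outer b a"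
  by (simp add: vec_eq_iff outer_def transpose_def)

lemma trace_outer: "trace (outer a b) = a \<bullet> b"
  by (simp add: trace_def outer_def inner_vec_def)

lemma trace_scaleR: "trace (c *\<^sub>R A) = c * trace A" for A :: "real^'n^'n"
  by (simp add: trace_def sum_distrib_left)

lemma transpose_add: "transpose (A + B) = transpose A + transpose B" for A :: "real^'n^'n"
  by (simp add: vec_eq_iff transpose_def)

lemma transpose_diff: "transpose (A - B) = transpose A - transpose B" for A :: "real^'n^'n"
  by (simp add: vec_eq_iff transpose_def)

lemma transpose_uminus: "transpose (- A) = - transpose A" for A :: "real^'n^'n"
  by (simp add: vec_eq_iff transpose_def)

lemma continuous_on_transpose [continuous_intros]:
  fixes f :: "'a::topological_space \<Rightarrow> real^'n^'m"
  shows "continuous_on S f \<Longrightarrow> continuous_on S (\<lambda>x. transpose (f x))"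
  unfolding transpose_def by (intro continuous_intros)

lemma continuous_on_trace [continuous_intros]:
  fixes f :: "'a::topological_space \<Rightarrow> real^'n^'n"
  shows "continuous_on S f \<Longrightarrow> continuous_on S (\<lambda>x. trace (f x))"
  unfolding trace_def by (intro continuous_intros)

lemma continuous_on_matrix_vector_mult [continuous_intros]:
  fixes f :: "'a::topological_space \<Rightarrow> real^'n^'m"
  shows "continuous_on S f \<Longrightarrow> continuous_on S (\<lambda>x. f x *v \<xi>)"
  unfolding matrix_vector_mult_def by (intro continuous_intros)

lemma quadratic_form_axis: "axis i 1 \<bullet> (A *v axis j 1) = A $ i $ j" for A :: "real^'n^'n"
  by (simp add: matrix_vector_mult_basis inner_axis' column_def)

lemma symmetric_inner_mult_commute:
  fixes A :: "real^'n^'n"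
  assumes "transpose A = A"
  shows "x \<bullet> (A *v y) = y \<bullet> (A *v x)"
  by (metis assms dot_lmul_matrix inner_commute transpose_matrix_vector)

lemma symmetric_quadratic_form_add_scaleR:
  fixes A :: "real^'n^'n"
  assumes "transpose A = A"
  shows "(x + t *\<^sub>R y) \<bullet> (A *v (x + t *\<^sub>R y))
    = x \<bullet> (A *v x) + 2 * t * (y \<bullet> (A *v x)) + t\<^sup>2 * (y \<bullet> (A *v y))"
  using symmetric_inner_mult_commute[OF assms, of x y]
  by (simp add: algebra_simps inner_add_left inner_add_right power2_eq_square)

lemma psd_Cauchy_Schwarz:
  fixes A :: "real^'n^'n"
  assumes sym: "transpose A = A" and psd: "\<And>z. 0 \<le> z \<bullet> (A *v z)"
  shows "(y \<bullet> (A *v x))\<^sup>2 \<le> (x \<bullet> (A *v x)) * (y \<bullet> (A *v y))"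
proof -
  define a b c where "a = x \<bullet> (A *v x)" and "b = y \<bullet> (A *v x)" and "c = y \<bullet> (A *v y)"
  have nonneg: "0 \<le> a + 2 * t * b + t\<^sup>2 * c" for t
    using psd[of "x + t *\<^sub>R y"] unfolding symmetric_quadratic_form_add_scaleR[OF sym] a_def b_def c_def .
  show ?thesis
  proof (cases "c = 0")
    case True
    have "b = 0"
    proof (rule ccontr)
      assume "b \<noteq> 0"
      with nonneg[of "- (a + 1) / (2 * b)"] True show False by (simp add: field_simps)
    qed
    then show ?thesis using True unfolding b_def c_def by simp
  next
    case False
    with psd[of y] have "c > 0" unfolding c_def by simp
    with nonneg[of "- b / c"] have "b\<^sup>2 \<le> a * c" by (simp add: field_simps power2_eq_square)
    then show ?thesis unfolding a_def b_def c_def .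
  qed
qed

lemma psd_quadratic_form_zero_imp_kernel:
  fixes A :: "real^'n^'n"
  assumes sym: "transpose A = A" and psd: "\<And>z. 0 \<le> z \<bullet> (A *v z)" and "x \<bullet> (A *v x) = 0"
  shows "A *v x = 0"
proof -
  have "((A *v x) \<bullet> (A *v x))\<^sup>2 \<le> 0"
    using psd_Cauchy_Schwarz[OF sym psd, of "A *v x" x] assms(3) by (metis mult_zero_left)
  then show ?thesis by (simp only: power2_less_eq_zero_iff inner_eq_zero_iff)
qed

lemma psd_trace_pos:
  fixes A :: "real^'n^'n"
  assumes sym: "transpose A = A" and psd: "\<And>z. 0 \<le> z \<bullet> (A *v z)" and "A \<noteq> 0"
  shows "trace A > 0"
proof (rule ccontr)
  assume "\<not> trace A > 0"
  have diag: "A $ i $ i = axis i 1 \<bullet> (A *v axis i 1)" for i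
    by (simp add: quadratic_form_axis)
  have "trace A \<ge> 0" unfolding trace_def diag by (intro sum_nonneg) (use psd in auto)
  with \<open>\<not> trace A > 0\<close> have "trace A = 0" by simp
  then have diag0: "A $ i $ i = 0" for i
    using sum_nonneg_eq_0_iff[of UNIV "\<lambda>i. A $ i $ i"] psd unfolding trace_def diag by simp
  have "A $ i $ j = 0" for i j
    using psd_Cauchy_Schwarz[OF sym psd, of "axis i 1" "axis j 1"] diag0
    by (simp add: quadratic_form_axis)
  then show False using \<open>A \<noteq> 0\<close> by (simp add: vec_eq_iff)
qed

lemma symmetric_trace_zero_entry_bound:
  fixes \<sigma> :: "real^'n^'n"
  assumes sym: "transpose \<sigma> = \<sigma>" and tr: "trace \<sigma> = 0" and "E \<ge> 0"
    and lower: "\<And>\<xi>. - E * (\<xi> \<bullet> \<xi>) \<le> \<xi> \<bullet> (\<sigma> *v \<xi>)"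
  shows "\<bar>\<sigma> $ i $ j\<bar> \<le> (real CARD('n) + 1) * E"
proof -
  have diag_lower: "- E \<le> \<sigma> $ k $ k" for k
    using lower[of "axis k 1"] by (simp add: quadratic_form_axis inner_axis_axis)
  have diag_upper: "\<sigma> $ k $ k \<le> real CARD('n) * E" for k
  proof -
    have "0 \<le> \<sigma> $ j $ j + E" for j using diag_lower[of j] by linarith
    then have "\<sigma> $ k $ k + E \<le> (\<Sum>j\<in>UNIV. \<sigma> $ j $ j + E)"
      by (intro member_le_sum) simp_all
    also have "\<dots> = real CARD('n) * E" using tr by (simp add: sum.distrib trace_def)
    finally show ?thesis using \<open>E \<ge> 0\<close> by linarith
  qed
  show ?thesis
  proof (cases "i = j")
    case True
    have "0 \<le> real CARD('n) * E" using \<open>E \<ge> 0\<close> by simp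
    with diag_lower[of j] diag_upper[of j] \<open>E \<ge> 0\<close> show ?thesis
      unfolding True abs_le_iff distrib_right by linarith
  next
    case False
    have "- E * (1 + t\<^sup>2) \<le> \<sigma> $ i $ i + 2 * t * \<sigma> $ i $ j + t\<^sup>2 * \<sigma> $ j $ j" for t
    proof -
      have "(axis i 1 + t *\<^sub>R axis j 1) \<bullet> (axis i 1 + t *\<^sub>R axis j (1::real)) = 1 + t\<^sup>2"
        using False by (simp add: inner_add_left inner_add_right inner_axis_axis power2_eq_square)
      moreover have "\<sigma> $ j $ i = \<sigma> $ i $ j" using sym by (metis transpose_def vec_lambda_beta)
      ultimately show ?thesis
        using lower[of "axis i 1 + t *\<^sub>R axis j 1"]
        by (simp add: symmetric_quadratic_form_add_scaleR[OF sym] quadratic_form_axis)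
    qed
    from this[of 1] this[of "-1"] diag_upper[of i] diag_upper[of j] show ?thesis
      by (simp add: abs_le_iff algebra_simps)
  qed
qed

lemma norm_matrix_le_entry_bound:
  fixes A :: "real^'n^'m"
  assumes "\<And>i j. \<bar>A $ i $ j\<bar> \<le> B"
  shows "norm A \<le> real CARD('m) * (real CARD('n) * B)"
proof -
  have "norm A \<le> (\<Sum>i\<in>UNIV. norm (A $ i))"
    unfolding norm_vec_def by (rule L2_set_le_sum) simp
  also have "\<dots> \<le> (\<Sum>i\<in>UNIV. \<Sum>j\<in>UNIV. \<bar>A $ i $ j\<bar>)"
    by (intro sum_mono norm_le_l1_cart)
  also have "\<dots> \<le> (\<Sum>i\<in>(UNIV::'m set). \<Sum>j\<in>(UNIV::'n set). B)"
    by (intro sum_mono assms)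
  finally show ?thesis by simp
qed

lemma exists_orthogonal_nonzero:
  fixes w :: "real^'n"
  assumes "CARD('n) \<ge> 2"
  obtains x where "x \<noteq> 0" "w \<bullet> x = 0"
proof -
  obtain i j :: 'n where "i \<noteq> j"
    using assms by (meson card_2_iff' ex_card)
  show ?thesis
  proof (cases "w $ i = 0 \<and> w $ j = 0")
    case True
    then show ?thesis by (intro that[of "axis i 1"]) (simp_all add: inner_axis axis_eq_0_iff)
  next
    case False
    define x where "x = (w $ j) *\<^sub>R axis i (1::real) - (w $ i) *\<^sub>R axis j 1"
    have "x $ i = w $ j" "x $ j = - w $ i" using \<open>i \<noteq> j\<close> by (auto simp: x_def axis_def)
    with False have "x \<noteq> 0" by auto
    moreover have "w \<bullet> x = 0" unfolding x_def by (simp add: inner_diff_right inner_axis)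
    ultimately show ?thesis by (rule that)
  qed
qed

section \<open>Extremal eigenvalues\<close>

text \<open>A minimiser \<open>x\<close> of the quadratic form on the unit sphere is an eigenvector:
  \<open>A - \<mu> Id\<close> is positive semidefinite and its form vanishes at \<open>x\<close>.\<close>
lemma symmetric_min_eigenvector:
  fixes A :: "real^'n^'n"
  assumes sym: "transpose A = A"
  obtains x \<mu> where "x \<noteq> 0" "A *v x = \<mu> *\<^sub>R x" "\<And>\<xi>. \<mu> * (\<xi> \<bullet> \<xi>) \<le> \<xi> \<bullet> (A *v \<xi>)"
proof -
  let ?q = "\<lambda>x::real^'n. x \<bullet> (A *v x)"
  have "continuous_on (sphere 0 1) ?q"
    by (intro continuous_intros linear_continuous_on matrix_vector_mul_bounded_linear)
  moreover have "axis undefined 1 \<in> sphere (0::real^'n) 1" by simp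
  ultimately obtain x where x: "x \<in> sphere 0 1" and min: "\<And>y. y \<in> sphere 0 1 \<Longrightarrow> ?q x \<le> ?q y"
    using continuous_attains_inf[OF compact_sphere] by blast
  define \<mu> where "\<mu> = ?q x"
  have Rayleigh: "\<mu> * (\<xi> \<bullet> \<xi>) \<le> ?q \<xi>" for \<xi>
  proof (cases "\<xi> = 0")
    case False
    then have "\<mu> \<le> ?q ((1 / norm \<xi>) *\<^sub>R \<xi>)" unfolding \<mu>_def by (intro min) simp
    with False show ?thesis
      by (simp add: matrix_vector_mult_scaleR dot_square_norm field_simps power2_eq_square)
  qed simp
  define B where "B = A - \<mu> *\<^sub>R mat 1"
  have "B *v x = 0"
  proof (rule psd_quadratic_form_zero_imp_kernel)
    show "transpose B = B" unfolding B_def using sym by (simp add: transpose_diff transpose_scalar)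
    have "\<xi> \<bullet> (B *v \<xi>) = ?q \<xi> - \<mu> * (\<xi> \<bullet> \<xi>)" for \<xi>
      unfolding B_def by (simp add: matrix_vector_mult_diff_rdistrib scaleR_matrix_vector_assoc[symmetric] inner_diff_right)
    then show "0 \<le> \<xi> \<bullet> (B *v \<xi>)" "x \<bullet> (B *v x) = 0" for \<xi>
      using Rayleigh[of \<xi>] x by (simp_all add: \<mu>_def dot_square_norm)
  qed
  then have "A *v x = \<mu> *\<^sub>R x"
    unfolding B_def by (simp add: matrix_vector_mult_diff_rdistrib scaleR_matrix_vector_assoc[symmetric])
  moreover have "x \<noteq> 0" using x by auto
  ultimately show ?thesis using Rayleigh that by blast
qed

lemma symmetric_max_eigenvector:
  fixes A :: "real^'n^'n"
  assumes "transpose A = A"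
  obtains x \<mu> where "x \<noteq> 0" "A *v x = \<mu> *\<^sub>R x" "\<And>\<xi>. \<xi> \<bullet> (A *v \<xi>) \<le> \<mu> * (\<xi> \<bullet> \<xi>)"
proof -
  have neg: "(- A) *v y = - (A *v y)" for y
    by (simp add: vec_eq_iff matrix_vector_mult_def sum_negf)
  have "transpose (- A) = - A" using assms by (simp add: transpose_uminus)
  obtain x \<mu> where "x \<noteq> 0" "(- A) *v x = \<mu> *\<^sub>R x" "\<And>\<xi>. \<mu> * (\<xi> \<bullet> \<xi>) \<le> \<xi> \<bullet> ((- A) *v \<xi>)"
    using symmetric_min_eigenvector[OF \<open>transpose (- A) = - A\<close>] by blast
  then show ?thesis
    by (intro that[of x "- \<mu>"]) (auto simp: neg minus_equation_iff[of "A *v x"] le_minus_iff)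
qed

lemma symmetric_eigenvectors_orthogonal:
  fixes A :: "real^'n^'n"
  assumes "transpose A = A" "A *v x = c *\<^sub>R x" "A *v y = d *\<^sub>R y" "c \<noteq> d"
  shows "x \<bullet> y = 0"
proof -
  have "c * (x \<bullet> y) = d * (x \<bullet> y)"
    using symmetric_inner_mult_commute[OF assms(1), of y x] assms(2,3) by (simp add: inner_commute)
  with \<open>c \<noteq> d\<close> show ?thesis by simp
qed

lemma finite_eigenvalues_symmetric:
  fixes A :: "real^'n^'n"
  assumes sym: "transpose A = A"
  shows "finite {c. \<exists>x. x \<noteq> 0 \<and> A *v x = c *\<^sub>R x}" (is "finite ?E")
proof -
  define f where "f c = (SOME x. x \<noteq> 0 \<and> A *v x = c *\<^sub>R x)" for c
  have f: "f c \<noteq> 0" "A *v f c = c *\<^sub>R f c" if "c \<in> ?E" for c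
  proof -
    from that have "\<exists>x. x \<noteq> 0 \<and> A *v x = c *\<^sub>R x" by blast
    then have "f c \<noteq> 0 \<and> A *v f c = c *\<^sub>R f c" unfolding f_def by (rule someI_ex)
    then show "f c \<noteq> 0" "A *v f c = c *\<^sub>R f c" by blast+
  qed
  have inj: "inj_on f ?E"
  proof (rule inj_onI)
    fix c d assume c: "c \<in> ?E" and d: "d \<in> ?E" and "f c = f d"
    then have "c *\<^sub>R f c = d *\<^sub>R f c" using f(2)[OF c] f(2)[OF d] by metis
    with f(1)[OF c] show "c = d" by simp
  qed
  have "pairwise orthogonal (f ` ?E)"
  proof (rule pairwiseI)
    fix p q assume "p \<in> f ` ?E" "q \<in> f ` ?E" "p \<noteq> q"
    then obtain c d where c: "c \<in> ?E" and d: "d \<in> ?E" and pq: "p = f c" "q = f d" "c \<noteq> d"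
      by blast
    show "orthogonal p q"
      unfolding orthogonal_def pq by (rule symmetric_eigenvectors_orthogonal[OF sym f(2)[OF c] f(2)[OF d] pq(3)])
  qed
  moreover have "0 \<notin> f ` ?E"
  proof
    assume "0 \<in> f ` ?E"
    then obtain c where "c \<in> ?E" "0 = f c" by (rule imageE)
    with f(1) show False by simp
  qed
  ultimately have "independent (f ` ?E)" by (rule pairwise_orthogonal_independent)
  then have "finite (f ` ?E)" by (rule independent_imp_finite)
  then show ?thesis using inj by (rule finite_imageD)
qed

lemma lambda_max_eqI:
  fixes A :: "real^'n^'n"
  assumes sym: "transpose A = A" and "x \<noteq> 0" "A *v x = \<mu> *\<^sub>R x"
    and Rayleigh: "\<And>\<xi>. \<xi> \<bullet> (A *v \<xi>) \<le> \<mu> * (\<xi> \<bullet> \<xi>)"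
  shows "lambda_max A = \<mu>"
  unfolding lambda_max_def
proof (rule Max_eqI)
  show "finite {c. \<exists>x. x \<noteq> 0 \<and> A *v x = c *\<^sub>R x}" by (rule finite_eigenvalues_symmetric[OF sym])
  show "\<mu> \<in> {c. \<exists>x. x \<noteq> 0 \<and> A *v x = c *\<^sub>R x}" using assms(2,3) by blast
  fix c assume "c \<in> {c. \<exists>x. x \<noteq> 0 \<and> A *v x = c *\<^sub>R x}"
  then obtain y where "y \<noteq> 0" "A *v y = c *\<^sub>R y" by blast
  with Rayleigh[of y] show "c \<le> \<mu>" by simp
qed

lemma lambda_max_eigenvector:
  fixes A :: "real^'n^'n"
  assumes "transpose A = A"
  obtains x where "x \<noteq> 0" "A *v x = lambda_max A *\<^sub>R x"
proof -
  obtain x \<mu> where x: "x \<noteq> 0" "A *v x = \<mu> *\<^sub>R x"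
    and "\<And>\<xi>. \<xi> \<bullet> (A *v \<xi>) \<le> \<mu> * (\<xi> \<bullet> \<xi>)"
    using symmetric_max_eigenvector[OF assms] by blast
  then have "lambda_max A = \<mu>" by (rule lambda_max_eqI[OF assms])
  with x show ?thesis by (intro that[of x]) simp_all
qed

lemma quadratic_form_le_lambda_max:
  fixes A :: "real^'n^'n"
  assumes "transpose A = A"
  shows "\<xi> \<bullet> (A *v \<xi>) \<le> lambda_max A * (\<xi> \<bullet> \<xi>)"
proof -
  obtain x \<mu> where "x \<noteq> 0" "A *v x = \<mu> *\<^sub>R x"
    and Rayleigh: "\<And>\<xi>. \<xi> \<bullet> (A *v \<xi>) \<le> \<mu> * (\<xi> \<bullet> \<xi>)"
    using symmetric_max_eigenvector[OF assms] by blast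
  then have "lambda_max A = \<mu>" by (rule lambda_max_eqI[OF assms])
  with Rayleigh show ?thesis by simp
qed

lemma psd_eigenvector_with_orthogonal_nonkernel:
  fixes P :: "real^'n^'n"
  assumes "CARD('n) \<ge> 2" and sym: "transpose P = P" and psd: "\<And>\<xi>. 0 \<le> \<xi> \<bullet> (P *v \<xi>)"
    and "P \<noteq> 0"
  obtains x \<mu> u where "x \<noteq> 0" "P *v x = \<mu> *\<^sub>R x" "u \<bullet> x = 0" "P *v u \<noteq> 0"
proof -
  obtain x \<mu> where x: "x \<noteq> 0" "P *v x = \<mu> *\<^sub>R x"
    and Rayleigh: "\<And>\<xi>. \<mu> * (\<xi> \<bullet> \<xi>) \<le> \<xi> \<bullet> (P *v \<xi>)"
    using symmetric_min_eigenvector[OF sym] by blast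
  show ?thesis
  proof (cases "\<mu> > 0")
    case True
    obtain u where u: "u \<noteq> 0" "x \<bullet> u = 0" using exists_orthogonal_nonzero[OF assms(1)] by blast
    with True have "0 < \<mu> * (u \<bullet> u)" by simp
    with Rayleigh[of u] have "P *v u \<noteq> 0" by auto
    with x u show ?thesis by (intro that[of x \<mu> u]) (auto simp: inner_commute)
  next
    case False
    have "\<mu> * (x \<bullet> x) \<ge> 0" using psd[of x] x(2) by simp
    moreover have "x \<bullet> x > 0" using x(1) by simp
    ultimately have "\<mu> = 0" using False by (simp add: zero_le_mult_iff)
    obtain y where y: "P *v y \<noteq> 0" using \<open>P \<noteq> 0\<close> matrix_eq[of P 0] by auto
    define u where "u = y - ((y \<bullet> x) / (x \<bullet> x)) *\<^sub>R x"
    have "P *v u = P *v y"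
      unfolding u_def using x \<open>\<mu> = 0\<close> by (simp add: matrix_vector_mult_diff_distrib matrix_vector_mult_scaleR)
    moreover have "u \<bullet> x = 0" unfolding u_def using x(1) by (simp add: inner_diff_left)
    ultimately show ?thesis using x y by (intro that[of x \<mu> u]) auto
  qed
qed

section \<open>Scalar inequalities\<close>

definition half_sq_div :: "real \<Rightarrow> real \<Rightarrow> real" where
  "half_sq_div s a = (if s > 0 then a\<^sup>2 / (2 * s) else 0)"

lemma half_sq_div_nonneg: "half_sq_div s a \<ge> 0"
  by (simp add: half_sq_div_def)

lemma half_sq_div_ge:
  assumes "s \<ge> 0" "s = 0 \<longrightarrow> a = 0"
  shows "k * a - k\<^sup>2 * s / 2 \<le> half_sq_div s a"
proof (cases "s > 0")
  case True
  have "0 \<le> (a - k * s)\<^sup>2 / (2 * s)" using True by simp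
  also have "\<dots> = a\<^sup>2 / (2 * s) - (k * a - k\<^sup>2 * s / 2)"
    using True by (simp add: field_simps power2_eq_square)
  finally show ?thesis using True by (simp add: half_sq_div_def)
qed (use assms in \<open>simp add: half_sq_div_def\<close>)

lemma half_sq_div_attained:
  assumes "s \<ge> 0" "s = 0 \<longrightarrow> a = 0"
  obtains k where "k * a - k\<^sup>2 * s / 2 = half_sq_div s a"
proof
  show "(if s > 0 then a / s else 0) * a - (if s > 0 then a / s else 0)\<^sup>2 * s / 2 = half_sq_div s a"
    using assms by (auto simp: half_sq_div_def field_simps power2_eq_square)
qed

lemma sup_quadratic_pair_le_iff:
  assumes "s \<ge> 0" "s = 0 \<longrightarrow> a = 0" "r \<ge> 0" "r = 0 \<longrightarrow> b = 0"
  shows "(\<forall>k l. k * a - k\<^sup>2 * s / 2 + l * b - l\<^sup>2 * r / 2 \<le> c)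
    \<longleftrightarrow> half_sq_div s a + half_sq_div r b \<le> c"
proof
  assume le: "\<forall>k l. k * a - k\<^sup>2 * s / 2 + l * b - l\<^sup>2 * r / 2 \<le> c"
  obtain k where k: "k * a - k\<^sup>2 * s / 2 = half_sq_div s a"
    using half_sq_div_attained[OF assms(1,2)] by blast
  obtain l where l: "l * b - l\<^sup>2 * r / 2 = half_sq_div r b"
    using half_sq_div_attained[OF assms(3,4)] by blast
  from le[rule_format, of k l] show "half_sq_div s a + half_sq_div r b \<le> c"
    by (simp add: k[symmetric] l[symmetric])
next
  assume le: "half_sq_div s a + half_sq_div r b \<le> c"
  show "\<forall>k l. k * a - k\<^sup>2 * s / 2 + l * b - l\<^sup>2 * r / 2 \<le> c"
  proof (intro allI)
    fix k l
    from le half_sq_div_ge[OF assms(1,2), of k] half_sq_div_ge[OF assms(3,4), of l]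
    show "k * a - k\<^sup>2 * s / 2 + l * b - l\<^sup>2 * r / 2 \<le> c" by linarith
  qed
qed

lemma half_sq_div_scaled_le:
  fixes c \<rho> a :: real
  assumes "0 \<le> c" "c \<le> 1" "-1 \<le> \<rho>" "1 + c * \<rho> > 0"
  defines "k \<equiv> c * a / (1 + c * \<rho>)"
  shows "half_sq_div (1 + c * \<rho>) (c * a) \<le> c * (k * a - k\<^sup>2 * (1 + \<rho>) / 2)"
proof -
  define s where "s = 1 + c * \<rho>"
  have s: "s > 0" and k: "k = c * a / s" unfolding s_def k_def using assms by simp_all
  have "c * (k * a - k\<^sup>2 * (1 + \<rho>) / 2) - half_sq_div s (c * a)
      = c\<^sup>2 * a\<^sup>2 * (2 * s - c * (1 + \<rho>) - s) / (2 * s\<^sup>2)"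
    using s unfolding half_sq_div_def k by (simp add: field_simps power2_eq_square)
  also have "2 * s - c * (1 + \<rho>) - s = 1 - c" unfolding s_def by (simp add: algebra_simps)
  also have "c\<^sup>2 * a\<^sup>2 * (1 - c) / (2 * s\<^sup>2) \<ge> 0" using assms by simp
  finally show ?thesis unfolding s_def by simp
qed

lemma half_sq_div_rescale:
  assumes "s > 0" "s + \<delta> > 0"
  shows "half_sq_div (s + \<delta>) ((1 + \<delta> / s) * \<alpha>) = (1 + \<delta> / s) * (\<alpha>\<^sup>2 / (2 * s))"
proof -
  define c where "c = 1 + \<delta> / s"
  have "c > 0" "s + \<delta> = s * c" using assms unfolding c_def by (simp_all add: field_simps)
  then show ?thesis
    using assms unfolding half_sq_div_def c_def[symmetric] by (simp add: field_simps power2_eq_square)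
qed

lemma half_sq_perturbation_le:
  fixes a b q s \<delta> \<kappa> :: real
  assumes "q \<ge> 0" "s > 0" "\<delta> \<in> {1, -1}" "\<bar>\<kappa>\<bar> \<le> 1/2" "b\<^sup>2 \<le> s * q"
  shows "(a + \<delta> * b)\<^sup>2 / (2 * s) \<le> q + a\<^sup>2 / (2 * s) + \<delta> * (a * b / s + \<kappa> * q)"
proof -
  have "(a + \<delta> * b)\<^sup>2 / (2 * s) = a\<^sup>2 / (2 * s) + \<delta> * (a * b / s) + b\<^sup>2 / (2 * s)"
    using assms(2,3) by (auto simp: field_simps power2_eq_square)
  moreover have "b\<^sup>2 / (2 * s) \<le> q / 2" using assms(2,5) by (simp add: divide_le_eq algebra_simps)
  moreover have "- q / 2 \<le> \<delta> * \<kappa> * q"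
    using assms(1,3,4) mult_right_mono[of "- 1 / 2" "\<delta> * \<kappa>" q] by (auto simp: abs_le_iff)
  ultimately show ?thesis by (simp add: algebra_simps)
qed

lemma exists_small_scaling:
  fixes d s n k q :: real
  assumes "d > 0" "s > 0" "q \<ge> 0"
  obtains \<epsilon> where "\<epsilon> > 0" "\<epsilon> * \<bar>n\<bar> \<le> d" "\<epsilon> * \<bar>k\<bar> \<le> 1 / 2" "\<epsilon> * (\<epsilon> * q) \<le> s"
proof
  define \<epsilon> where "\<epsilon> = min (d / (\<bar>n\<bar> + 1)) (min (1 / (2 * \<bar>k\<bar> + 1)) (min 1 (s / (q + 1))))"
  show "\<epsilon> > 0" unfolding \<epsilon>_def using assms by simp
  have "\<epsilon> * \<bar>n\<bar> \<le> d / (\<bar>n\<bar> + 1) * (\<bar>n\<bar> + 1)"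
    unfolding \<epsilon>_def using assms by (intro mult_mono) auto
  then show "\<epsilon> * \<bar>n\<bar> \<le> d" by simp
  have "\<epsilon> * \<bar>k\<bar> \<le> 1 / (2 * \<bar>k\<bar> + 1) * \<bar>k\<bar>" unfolding \<epsilon>_def by (intro mult_right_mono) auto
  also have "\<dots> \<le> 1 / 2" by (simp add: field_simps)
  finally show "\<epsilon> * \<bar>k\<bar> \<le> 1 / 2" .
  have "\<epsilon> * (\<epsilon> * q) \<le> 1 * (s / (q + 1) * q)"
    using \<open>\<epsilon> > 0\<close> assms unfolding \<epsilon>_def by (intro mult_mono) auto
  also have "\<dots> \<le> s" using assms by (simp add: field_simps)
  finally show "\<epsilon> * (\<epsilon> * q) \<le> s" .
qed

lemma sq_div_less_imp_le_sqrt: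
  fixes x s N E :: real
  assumes "0 \<le> x" "s > 0" "N > 0" "x\<^sup>2 / (N * s\<^sup>2) < E"
  shows "x \<le> sqrt (N * E) * s"
proof -
  from assms have "x\<^sup>2 \<le> (N * E) * s\<^sup>2" by (simp add: divide_less_eq algebra_simps)
  then have "x \<le> sqrt ((N * E) * s\<^sup>2)" by (rule real_le_rsqrt)
  with \<open>s > 0\<close> show ?thesis by (simp add: real_sqrt_mult)
qed

lemma sq_div_le_of_le_sqrt:
  fixes x s K :: real
  assumes "0 \<le> K" "s > 0" "0 \<le> x" "x \<le> sqrt K * s"
  shows "x\<^sup>2 / (2 * s) \<le> K * s / 2"
proof -
  have "x\<^sup>2 \<le> (sqrt K * s)\<^sup>2" using assms by (intro power_mono) auto
  also have "\<dots> = K * s\<^sup>2" using assms by (simp add: power_mult_distrib)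
  finally show ?thesis using assms by (simp add: field_simps power2_eq_square)
qed

lemma less_sqrt_of_sq_div_less:
  fixes x s K :: real
  assumes "s > 0" "0 \<le> x" "x\<^sup>2 / (2 * s) < K * s / 2"
  shows "x < sqrt K * s"
proof -
  have "x\<^sup>2 < K * s\<^sup>2" using assms by (simp add: field_simps power2_eq_square)
  then have "sqrt (x\<^sup>2) < sqrt (K * s\<^sup>2)" by (rule real_sqrt_less_mono)
  with assms show ?thesis by (simp add: real_sqrt_mult)
qed

lemma scaled_sq_div_less:
  fixes x s c N E :: real
  assumes "0 \<le> c" "c < 1" "0 \<le> s" "N > 0" "E > 0" "0 \<le> x" "x \<le> sqrt (N * E) * s"
  shows "(c * x)\<^sup>2 / (N * (1 - c + c * s)\<^sup>2) < E"
proof -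
  have "c * x \<le> sqrt (N * E) * (c * s)" using assms by (simp add: mult_left_mono mult.left_commute)
  also have "\<dots> < sqrt (N * E) * (1 - c + c * s)" using assms by simp
  finally have "(c * x)\<^sup>2 < (sqrt (N * E) * (1 - c + c * s))\<^sup>2"
    using assms by (intro power_strict_mono) auto
  also have "\<dots> = E * (N * (1 - c + c * s)\<^sup>2)" using assms by (simp add: power_mult_distrib)
  moreover have "1 - c + c * s > 0" using assms by (intro add_pos_nonneg) auto
  ultimately show ?thesis using assms by (simp add: divide_less_eq)
qed

lemma norm_scaleR_cone_le:
  fixes a :: "'a::real_normed_vector"
  assumes "s > 0" "s + \<delta> > 0" "norm a \<le> K * s"
  shows "norm ((1 + \<delta> / s) *\<^sub>R a) \<le> K * (s + \<delta>)"
proof -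
  have "1 + \<delta> / s > 0" using assms(1,2) by (simp add: field_simps)
  then have "norm ((1 + \<delta> / s) *\<^sub>R a) \<le> (1 + \<delta> / s) * (K * s)"
    using assms(3) by (simp add: mult_left_mono)
  also have "\<dots> = K * (s + \<delta>)" using assms(1) by (simp add: field_simps)
  finally show ?thesis .
qed

lemma norm_le_half_sum_diff:
  fixes m v :: "'a::real_normed_vector"
  shows "norm v \<le> (norm (m + v) + norm (m - v)) / 2" and "norm m \<le> (norm (m + v) + norm (m - v)) / 2"
proof -
  have "2 *\<^sub>R v = (m + v) - (m - v)" "2 *\<^sub>R m = (m + v) + (m - v)"
    by (simp_all add: scaleR_2 algebra_simps)
  then have "2 * norm v = norm ((m + v) - (m - v))" "2 * norm m = norm ((m + v) + (m - v))"
    by (metis norm_scaleR abs_numeral)+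
  with norm_triangle_ineq4[of "m + v" "m - v"] norm_triangle_ineq[of "m + v" "m - v"]
  show "norm v \<le> (norm (m + v) + norm (m - v)) / 2" and "norm m \<le> (norm (m + v) + norm (m - v)) / 2"
    by simp_all
qed

section \<open>The closure of U and its boundedness\<close>

text \<open>The condition \<open>Q z \<le> e \<rho>\<close>, i.e. \<open>M z \<le> e \<rho> Id\<close>, is written via
  \<open>a\<^sup>2 / (2 s) = sup\<^sub>k (k a - k\<^sup>2 s / 2)\<close> as a family of inequalities affine in \<open>z\<close>, which stays
  meaningful and closed at \<open>\<rho> = \<plusminus>1\<close>.\<close>
definition Ubar :: "(real \<Rightarrow> real) \<Rightarrow> 'n::finite state set" where
  "Ubar e = {(\<rho>, v, m, \<sigma>, p). transpose \<sigma> = \<sigma> \<and> trace \<sigma> = 0 \<and> -1 \<le> \<rho> \<and> \<rho> \<le> 1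
     \<and> norm (m + v) \<le> sqrt (real CARD('n) * e 1) * (1 + \<rho>)
     \<and> norm (m - v) \<le> sqrt (real CARD('n) * e (-1)) * (1 - \<rho>)
     \<and> (\<forall>\<xi> k l. k * ((m + v) \<bullet> \<xi>) - k\<^sup>2 * (1 + \<rho>) / 2 + l * ((m - v) \<bullet> \<xi>) - l\<^sup>2 * (1 - \<rho>) / 2
          \<le> e \<rho> * (\<xi> \<bullet> \<xi>) + \<xi> \<bullet> (\<sigma> *v \<xi>))}"

lemma Ubar_iff:
  fixes \<sigma> :: "real^'n::finite^'n"
  shows "(\<rho>, v, m, \<sigma>, p) \<in> Ubar e \<longleftrightarrow>
    transpose \<sigma> = \<sigma> \<and> trace \<sigma> = 0 \<and> -1 \<le> \<rho> \<and> \<rho> \<le> 1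
    \<and> norm (m + v) \<le> sqrt (real CARD('n) * e 1) * (1 + \<rho>)
    \<and> norm (m - v) \<le> sqrt (real CARD('n) * e (-1)) * (1 - \<rho>)
    \<and> (\<forall>\<xi>. half_sq_div (1 + \<rho>) ((m + v) \<bullet> \<xi>) + half_sq_div (1 - \<rho>) ((m - v) \<bullet> \<xi>)
          \<le> e \<rho> * (\<xi> \<bullet> \<xi>) + \<xi> \<bullet> (\<sigma> *v \<xi>))"
proof -
  have "(\<forall>k l. k * ((m + v) \<bullet> \<xi>) - k\<^sup>2 * (1 + \<rho>) / 2 + l * ((m - v) \<bullet> \<xi>) - l\<^sup>2 * (1 - \<rho>) / 2
          \<le> e \<rho> * (\<xi> \<bullet> \<xi>) + \<xi> \<bullet> (\<sigma> *v \<xi>))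
    \<longleftrightarrow> half_sq_div (1 + \<rho>) ((m + v) \<bullet> \<xi>) + half_sq_div (1 - \<rho>) ((m - v) \<bullet> \<xi>)
          \<le> e \<rho> * (\<xi> \<bullet> \<xi>) + \<xi> \<bullet> (\<sigma> *v \<xi>)"
    if "-1 \<le> \<rho>" "\<rho> \<le> 1" "norm (m + v) \<le> sqrt (real CARD('n) * e 1) * (1 + \<rho>)"
      "norm (m - v) \<le> sqrt (real CARD('n) * e (-1)) * (1 - \<rho>)" for \<xi>
    by (rule sup_quadratic_pair_le_iff) (use that in auto)
  then show ?thesis unfolding Ubar_def by auto
qed

text \<open>For \<open>-1 < \<rho> < 1\<close> this is \<open>e \<rho> Id - M z\<close> (compare \<open>quadratic_form_defect_matrix\<close>
  with \<open>quadratic_form_Mmat\<close>).\<close>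
definition defect_matrix :: "(real \<Rightarrow> real) \<Rightarrow> 'n::finite state \<Rightarrow> real^'n^'n" where
  "defect_matrix e z = (case z of (\<rho>, v, m, \<sigma>, p) \<Rightarrow> e \<rho> *\<^sub>R mat 1 + \<sigma>
     - (if 1 + \<rho> > 0 then (1 / (2 * (1 + \<rho>))) *\<^sub>R outer (m + v) (m + v) else 0)
     - (if 1 - \<rho> > 0 then (1 / (2 * (1 - \<rho>))) *\<^sub>R outer (m - v) (m - v) else 0))"

lemma quadratic_form_defect_matrix:
  "\<xi> \<bullet> (defect_matrix e (\<rho>, v, m, \<sigma>, p) *v \<xi>) = e \<rho> * (\<xi> \<bullet> \<xi>) + \<xi> \<bullet> (\<sigma> *v \<xi>)
     - half_sq_div (1 + \<rho>) ((m + v) \<bullet> \<xi>) - half_sq_div (1 - \<rho>) ((m - v) \<bullet> \<xi>)"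
  unfolding defect_matrix_def half_sq_div_def
  by (simp add: matrix_vector_mult_add_rdistrib matrix_vector_mult_diff_rdistrib inner_add_right
      inner_diff_right scaleR_matrix_vector_assoc[symmetric] inner_outer_self)

lemma symmetric_defect_matrix:
  "transpose \<sigma> = \<sigma> \<Longrightarrow> transpose (defect_matrix e (\<rho>, v, m, \<sigma>, p)) = defect_matrix e (\<rho>, v, m, \<sigma>, p)"
  unfolding defect_matrix_def
  by (simp add: transpose_add transpose_diff transpose_scalar transpose_outer if_distrib[of transpose] transpose_mat[of 0, unfolded mat_0])

lemma trace_defect_matrix:
  fixes \<sigma> :: "real^'n::finite^'n"
  assumes "trace \<sigma> = 0"
  shows "trace (defect_matrix e (\<rho>, v, m, \<sigma>, p))
    = real CARD('n) * e \<rho> - half_sq_div (1 + \<rho>) (norm (m + v)) - half_sq_div (1 - \<rho>) (norm (m - v))"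
  unfolding defect_matrix_def half_sq_div_def using assms
  by (simp add: trace_add trace_sub trace_scaleR trace_I trace_outer if_distrib[of trace] trace_0[unfolded mat_0] dot_square_norm)

lemma defect_matrix_psd:
  assumes "z \<in> Ubar e"
  shows "0 \<le> \<xi> \<bullet> (defect_matrix e z *v \<xi>)"
proof -
  obtain \<rho> v m \<sigma> p where z: "z = (\<rho>, v, m, \<sigma>, p)" by (cases z)
  with assms have "half_sq_div (1 + \<rho>) ((m + v) \<bullet> \<xi>) + half_sq_div (1 - \<rho>) ((m - v) \<bullet> \<xi>)
      \<le> e \<rho> * (\<xi> \<bullet> \<xi>) + \<xi> \<bullet> (\<sigma> *v \<xi>)"
    by (simp add: Ubar_iff)
  then show ?thesis unfolding z quadratic_form_defect_matrix by simp
qed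

lemma norm_proj_le: "norm (proj (\<rho>, v, m, \<sigma>, p)) \<le> \<bar>\<rho>\<bar> + (norm v + (norm m + norm \<sigma>))"
proof -
  have "norm (proj (\<rho>, v, m, \<sigma>, p)) \<le> norm \<rho> + norm (v, m, \<sigma>)"
    unfolding proj_def using norm_Pair_le[of \<rho> "(v, m, \<sigma>)"] by simp
  also have "\<dots> \<le> norm \<rho> + (norm v + norm (m, \<sigma>))" by (intro add_left_mono norm_Pair_le)
  also have "\<dots> \<le> norm \<rho> + (norm v + (norm m + norm \<sigma>))" by (intro add_left_mono norm_Pair_le)
  finally show ?thesis by simp
qed

lemma Mmat_scalar_identity:
  assumes "-1 < \<rho>" "\<rho> < 1"
  shows "(1 / (1 - \<rho>\<^sup>2)) * (b\<^sup>2 - \<rho> * (2 * a * b) + a\<^sup>2)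
    = half_sq_div (1 + \<rho>) (a + b) + half_sq_div (1 - \<rho>) (a - b)"
proof -
  have pos: "1 + \<rho> > 0" "1 - \<rho> > 0" using assms by auto
  then have "(1 + \<rho>) * (1 - \<rho>) \<noteq> 0" "(2 * (1 + \<rho>)) * (2 * (1 - \<rho>)) \<noteq> 0" by simp_all
  note nonzero = this
  have "1 - \<rho>\<^sup>2 = (1 + \<rho>) * (1 - \<rho>)" by (simp add: algebra_simps power2_eq_square)
  then have "(1 / (1 - \<rho>\<^sup>2)) * (b\<^sup>2 - \<rho> * (2 * a * b) + a\<^sup>2)
      = (b\<^sup>2 - \<rho> * (2 * a * b) + a\<^sup>2) / ((1 + \<rho>) * (1 - \<rho>))" by simp
  also have "\<dots> = ((a + b)\<^sup>2 * (2 * (1 - \<rho>)) + (a - b)\<^sup>2 * (2 * (1 + \<rho>)))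
      / ((2 * (1 + \<rho>)) * (2 * (1 - \<rho>)))"
    unfolding frac_eq_eq[OF nonzero] by (simp add: algebra_simps power2_eq_square)
  also have "\<dots> = (a + b)\<^sup>2 / (2 * (1 + \<rho>)) + (a - b)\<^sup>2 / (2 * (1 - \<rho>))"
    using pos by (simp add: add_frac_eq)
  finally show ?thesis using pos by (simp add: half_sq_div_def)
qed

lemma quadratic_form_Mmat:
  assumes "-1 < \<rho>" "\<rho> < 1"
  shows "\<xi> \<bullet> (Mmat (\<rho>, v, m, \<sigma>, p) *v \<xi>)
    = half_sq_div (1 + \<rho>) ((m + v) \<bullet> \<xi>) + half_sq_div (1 - \<rho>) ((m - v) \<bullet> \<xi>) - \<xi> \<bullet> (\<sigma> *v \<xi>)"
proof -
  have "\<xi> \<bullet> (Mmat (\<rho>, v, m, \<sigma>, p) *v \<xi>) = (1 / (1 - \<rho>\<^sup>2))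
      * ((v \<bullet> \<xi>)\<^sup>2 - \<rho> * (2 * (m \<bullet> \<xi>) * (v \<bullet> \<xi>)) + (m \<bullet> \<xi>)\<^sup>2) - \<xi> \<bullet> (\<sigma> *v \<xi>)"
    unfolding Mmat_def
    by (simp add: matrix_vector_mult_add_rdistrib matrix_vector_mult_diff_rdistrib inner_add_right
        inner_diff_right scaleR_matrix_vector_assoc[symmetric] outer_mult_vec inner_commute
        power2_eq_square algebra_simps)
  then show ?thesis
    unfolding Mmat_scalar_identity[OF assms] by (simp add: inner_add_left inner_diff_left)
qed

lemma symmetric_Mmat:
  "transpose \<sigma> = \<sigma> \<Longrightarrow> transpose (Mmat (\<rho>, v, m, \<sigma>, p)) = Mmat (\<rho>, v, m, \<sigma>, p)"
  unfolding Mmat_def by (simp add: transpose_add transpose_diff transpose_scalar transpose_outer add.commute)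

locale affine_energy =
  fixes e :: "real \<Rightarrow> real"
  assumes affine: "\<exists>a b. \<forall>r. e r = a * r + b"
    and pos_plus: "e 1 > 0" and pos_minus: "e (-1) > 0"
begin

lemma e_interpolation: "e r = (1 + r) / 2 * e 1 + (1 - r) / 2 * e (-1)"
  using affine by (auto simp: field_simps)

lemma e_scaled: "e (c * r) = c * e r + (1 - c) * e 0"
  using affine by (auto simp: field_simps)

lemma e_translated: "e (r + d) = e r + d * (e 1 - e (-1)) / 2"
  using affine by (auto simp: field_simps)

lemma e_zero_pos: "e 0 > 0"
  using e_interpolation[of 0] pos_plus pos_minus by simp

lemma e_le_max: "-1 \<le> r \<Longrightarrow> r \<le> 1 \<Longrightarrow> e r \<le> max (e 1) (e (-1))"
  unfolding e_interpolation[of r] by (rule convex_bound_le) (auto simp: add_divide_distrib[symmetric])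

lemma Uset_subset_Ubar: "Uset e \<subseteq> (Ubar e :: 'n::finite state set)"
proof
  fix z :: "'n state" assume "z \<in> Uset e"
  moreover obtain \<rho> v m \<sigma> p where z: "z = (\<rho>, v, m, \<sigma>, p)" by (cases z)
  ultimately have sym: "transpose \<sigma> = \<sigma>" and "trace \<sigma> = 0" "-1 < \<rho>" "\<rho> < 1"
    and T: "Tplus z < e 1" "Tminus z < e (-1)" and Q: "Qf z < e \<rho>"
    unfolding Uset_def Zset_def by auto
  have "norm (m + v) \<le> sqrt (real CARD('n) * e 1) * (1 + \<rho>)"
    by (rule sq_div_less_imp_le_sqrt) (use T \<open>-1 < \<rho>\<close> in \<open>simp_all add: Tplus_def z add.commute\<close>)
  moreover have "norm (m - v) \<le> sqrt (real CARD('n) * e (-1)) * (1 - \<rho>)"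
    by (rule sq_div_less_imp_le_sqrt) (use T \<open>\<rho> < 1\<close> in \<open>simp_all add: Tminus_def z power2_commute\<close>)
  moreover have "half_sq_div (1 + \<rho>) ((m + v) \<bullet> \<xi>) + half_sq_div (1 - \<rho>) ((m - v) \<bullet> \<xi>)
      \<le> e \<rho> * (\<xi> \<bullet> \<xi>) + \<xi> \<bullet> (\<sigma> *v \<xi>)" for \<xi>
  proof -
    have "\<xi> \<bullet> (Mmat z *v \<xi>) \<le> lambda_max (Mmat z) * (\<xi> \<bullet> \<xi>)"
      unfolding z by (rule quadratic_form_le_lambda_max[OF symmetric_Mmat[OF sym]])
    also have "\<dots> \<le> e \<rho> * (\<xi> \<bullet> \<xi>)" using Q unfolding Qf_def by (intro mult_right_mono) auto
    finally show ?thesis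
      unfolding z quadratic_form_Mmat[OF \<open>-1 < \<rho>\<close> \<open>\<rho> < 1\<close>] by simp
  qed
  ultimately show "z \<in> Ubar e"
    unfolding z Ubar_iff using sym \<open>trace \<sigma> = 0\<close> \<open>-1 < \<rho>\<close> \<open>\<rho> < 1\<close> by simp
qed

lemma closed_Ubar: "closed (Ubar e :: 'n::finite state set)"
proof -
  obtain a b where e: "e = (\<lambda>r. a * r + b)" using affine by auto
  show ?thesis
    unfolding Ubar_def e case_prod_beta
    by (intro closed_Collect_conj closed_Collect_all;
        rule closed_Collect_eq closed_Collect_le; intro continuous_intros; simp)
qed

lemma Qf_scaleR_less:
  assumes z: "(\<rho>, v, m, \<sigma>, p) \<in> (Ubar e :: 'n::finite state set)" and c: "0 \<le> c" "c < 1"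
  shows "Qf (c *\<^sub>R (\<rho>, v, m, \<sigma>, p)) < e (c * \<rho>)"
proof -
  from z have sym: "transpose \<sigma> = \<sigma>" and \<rho>: "-1 \<le> \<rho>" "\<rho> \<le> 1"
    and Legendre: "\<And>\<xi> k l. k * ((m + v) \<bullet> \<xi>) - k\<^sup>2 * (1 + \<rho>) / 2 + l * ((m - v) \<bullet> \<xi>) - l\<^sup>2 * (1 - \<rho>) / 2
        \<le> e \<rho> * (\<xi> \<bullet> \<xi>) + \<xi> \<bullet> (\<sigma> *v \<xi>)"
    unfolding Ubar_def by auto
  have "\<bar>c * \<rho>\<bar> \<le> c" using c \<rho> by (simp add: abs_mult mult_left_le abs_le_iff)
  with c have c\<rho>: "-1 < c * \<rho>" "c * \<rho> < 1" by auto
  define M where "M = Mmat (c * \<rho>, c *\<^sub>R v, c *\<^sub>R m, c *\<^sub>R \<sigma>, c * p)"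
  have "transpose M = M" unfolding M_def using sym by (simp add: symmetric_Mmat transpose_scalar)
  then obtain x where x: "x \<noteq> 0" "M *v x = lambda_max M *\<^sub>R x"
    using lambda_max_eigenvector by blast
  define \<alpha> \<beta> where "\<alpha> = (m + v) \<bullet> x" and "\<beta> = (m - v) \<bullet> x"
  define k l where "k = c * \<alpha> / (1 + c * \<rho>)" and "l = c * \<beta> / (1 + c * (- \<rho>))"
  have "lambda_max M * (x \<bullet> x) = x \<bullet> (M *v x)" using x(2) by simp
  also have "\<dots> = half_sq_div (1 + c * \<rho>) (c * \<alpha>) + half_sq_div (1 - c * \<rho>) (c * \<beta>)
      - c * (x \<bullet> (\<sigma> *v x))"
    unfolding M_def quadratic_form_Mmat[OF c\<rho>] \<alpha>_def \<beta>_def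
    by (simp add: scaleR_add_right[symmetric] scaleR_diff_right[symmetric]
        scaleR_matrix_vector_assoc[symmetric])
  also have "\<dots> \<le> c * (k * \<alpha> - k\<^sup>2 * (1 + \<rho>) / 2) + c * (l * \<beta> - l\<^sup>2 * (1 - \<rho>) / 2)
      - c * (x \<bullet> (\<sigma> *v x))"
    using half_sq_div_scaled_le[of c \<rho> \<alpha>] half_sq_div_scaled_le[of c "- \<rho>" \<beta>] c \<rho> c\<rho>
    unfolding k_def l_def by simp
  also have "\<dots> \<le> c * (e \<rho> * (x \<bullet> x))"
    using mult_left_mono[OF Legendre[of k x l, folded \<alpha>_def \<beta>_def] c(1)] by (simp add: algebra_simps)
  also have "\<dots> < e (c * \<rho>) * (x \<bullet> x)"
  proof -
    have "c * e \<rho> < e (c * \<rho>)"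
      using e_scaled[of c \<rho>] mult_pos_pos[of "1 - c" "e 0"] c e_zero_pos by simp
    then show ?thesis using mult_strict_right_mono[of _ _ "x \<bullet> x"] x(1) by (simp add: mult.assoc)
  qed
  finally show ?thesis using x(1) unfolding Qf_def M_def by simp
qed

lemma scaleR_Ubar_in_Uset:
  assumes z: "z \<in> (Ubar e :: 'n::finite state set)" and c: "0 \<le> c" "c < 1"
  shows "c *\<^sub>R z \<in> Uset e"
proof -
  obtain \<rho> v m \<sigma> p where z_eq: "z = (\<rho>, v, m, \<sigma>, p)" by (cases z)
  with z have sym: "transpose \<sigma> = \<sigma>" and tr: "trace \<sigma> = 0" and \<rho>: "-1 \<le> \<rho>" "\<rho> \<le> 1"
    and cone: "norm (m + v) \<le> sqrt (real CARD('n) * e 1) * (1 + \<rho>)"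
      "norm (m - v) \<le> sqrt (real CARD('n) * e (-1)) * (1 - \<rho>)"
    by (simp_all add: Ubar_iff)
  have "\<bar>c * \<rho>\<bar> \<le> c" using c \<rho> by (simp add: abs_mult mult_left_le abs_le_iff)
  with c have c\<rho>: "-1 < c * \<rho>" "c * \<rho> < 1" by auto
  have "1 - c + c * (1 + \<rho>) = c * \<rho> + 1" "1 - c + c * (1 - \<rho>) = 1 - c * \<rho>"
    by (simp_all add: algebra_simps)
  note denominators = this
  have "Tplus (c *\<^sub>R z) = (c * norm (m + v))\<^sup>2 / (real CARD('n) * (1 - c + c * (1 + \<rho>))\<^sup>2)"
    unfolding z_eq Tplus_def denominators using c by (simp add: scaleR_add_right[symmetric])
  also have "\<dots> < e 1"
    by (rule scaled_sq_div_less) (use c \<rho> cone pos_plus in auto)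
  finally have Tplus: "Tplus (c *\<^sub>R z) < e 1" .
  have "Tminus (c *\<^sub>R z) = (c * norm (m - v))\<^sup>2 / (real CARD('n) * (1 - c + c * (1 - \<rho>))\<^sup>2)"
    unfolding z_eq Tminus_def denominators using c
    by (simp add: scaleR_diff_right[symmetric] power2_commute[of "c * \<rho>"])
  also have "\<dots> < e (-1)"
    by (rule scaled_sq_div_less) (use c \<rho> cone pos_minus in auto)
  finally have Tminus: "Tminus (c *\<^sub>R z) < e (-1)" .
  have "Qf (c *\<^sub>R z) < e (c * \<rho>)" unfolding z_eq by (rule Qf_scaleR_less[OF z[unfolded z_eq] c])
  with Tplus Tminus c\<rho> sym tr show ?thesis
    unfolding z_eq Uset_def Zset_def by (simp add: transpose_scalar trace_scaleR)
qed

lemma closure_Uset: "closure (Uset e) = (Ubar e :: 'n::finite state set)"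
proof
  show "closure (Uset e) \<subseteq> Ubar e" by (rule closure_minimal[OF Uset_subset_Ubar closed_Ubar])
  show "Ubar e \<subseteq> closure (Uset e)"
  proof
    fix z assume "z \<in> Ubar e"
    show "z \<in> closure (Uset e)"
      unfolding closure_sequential
    proof (intro exI conjI allI)
      show "(real k / real (Suc k)) *\<^sub>R z \<in> Uset e" for k
        using \<open>z \<in> Ubar e\<close> by (rule scaleR_Ubar_in_Uset) auto
      have "(\<lambda>k. (real k / real (Suc k)) *\<^sub>R z) \<longlonglongrightarrow> 1 *\<^sub>R z"
        by (intro tendsto_scaleR LIMSEQ_n_over_Suc_n tendsto_const)
      then show "(\<lambda>k. (real k / real (Suc k)) *\<^sub>R z) \<longlonglongrightarrow> z" by simp
    qed
  qed
qed

lemma Ubar_sigma_lower_bound: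
  assumes "(\<rho>, v, m, \<sigma>, p) \<in> (Ubar e :: 'n::finite state set)"
  shows "- max (e 1) (e (-1)) * (\<xi> \<bullet> \<xi>) \<le> \<xi> \<bullet> (\<sigma> *v \<xi>)"
proof -
  from assms have "-1 \<le> \<rho>" "\<rho> \<le> 1" and "half_sq_div (1 + \<rho>) ((m + v) \<bullet> \<xi>)
      + half_sq_div (1 - \<rho>) ((m - v) \<bullet> \<xi>) \<le> e \<rho> * (\<xi> \<bullet> \<xi>) + \<xi> \<bullet> (\<sigma> *v \<xi>)"
    by (simp_all add: Ubar_iff)
  moreover have "e \<rho> * (\<xi> \<bullet> \<xi>) \<le> max (e 1) (e (-1)) * (\<xi> \<bullet> \<xi>)"
    using e_le_max[OF \<open>-1 \<le> \<rho>\<close> \<open>\<rho> \<le> 1\<close>] by (intro mult_right_mono) auto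
  ultimately show ?thesis
    using half_sq_div_nonneg[of "1 + \<rho>" "(m + v) \<bullet> \<xi>"] half_sq_div_nonneg[of "1 - \<rho>" "(m - v) \<bullet> \<xi>"]
    by linarith
qed

lemma bounded_proj_Ubar: "bounded (proj ` (Ubar e :: 'n::finite state set))"
proof -
  define N E where "N = real CARD('n)" and "E = max (e 1) (e (-1))"
  define K where "K = sqrt (N * e 1) + sqrt (N * e (-1))"
  have "E \<ge> 0" unfolding E_def using pos_plus by simp
  have "norm (proj z) \<le> 1 + (K + (K + N * (N * ((N + 1) * E))))" if "z \<in> Ubar e" for z :: "'n state"
  proof -
    obtain \<rho> v m \<sigma> p where z: "z = (\<rho>, v, m, \<sigma>, p)" by (cases z)
    with that have sym: "transpose \<sigma> = \<sigma>" and tr: "trace \<sigma> = 0" and \<rho>: "-1 \<le> \<rho>" "\<rho> \<le> 1"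
      and cone: "norm (m + v) \<le> sqrt (N * e 1) * (1 + \<rho>)" "norm (m - v) \<le> sqrt (N * e (-1)) * (1 - \<rho>)"
      by (simp_all add: Ubar_iff N_def)
    from that z have "norm \<sigma> \<le> N * (N * ((N + 1) * E))"
      unfolding N_def E_def
      by (intro norm_matrix_le_entry_bound symmetric_trace_zero_entry_bound sym tr Ubar_sigma_lower_bound)
        (simp_all add: \<open>E \<ge> 0\<close>[unfolded E_def])
    moreover have cone_bound: "norm (m + v) + norm (m - v) \<le> 2 * K"
    proof -
      have "sqrt (N * e 1) * (1 + \<rho>) \<le> sqrt (N * e 1) * 2"
        "sqrt (N * e (-1)) * (1 - \<rho>) \<le> sqrt (N * e (-1)) * 2"
        using \<rho> pos_plus pos_minus by (intro mult_left_mono; simp add: N_def)+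
      with cone show ?thesis unfolding K_def distrib_left by linarith
    qed
    then have "norm v \<le> K" using norm_le_half_sum_diff(1)[of v m] by (simp add: field_simps)
    moreover from cone_bound have "norm m \<le> K"
      using norm_le_half_sum_diff(2)[of m v] by (simp add: field_simps)
    ultimately show ?thesis using norm_proj_le[of \<rho> v m \<sigma> p] \<rho> unfolding z by simp
  qed
  then show ?thesis unfolding bounded_iff by blast
qed

end

section \<open>Segments in wave cone directions\<close>

definition Lambda_segment_centre :: "'n::finite state set \<Rightarrow> 'n state \<Rightarrow> bool" where
  "Lambda_segment_centre S z \<longleftrightarrow> (\<exists>zb \<in> Lambda - {0}. z + zb \<in> S \<and> z - zb \<in> S)"

lemma Lambda_iff:
  "(\<rho>, v, m, \<sigma>, p) \<in> Lambda \<longleftrightarrow> transpose \<sigma> = \<sigma> \<and> trace \<sigma> = 0 \<and>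
    (\<exists>x t. (x, t) \<noteq> (0, 0) \<and> (\<sigma> + p *\<^sub>R mat 1) *v x + t *\<^sub>R v = 0 \<and> v \<bullet> x = 0 \<and> m \<bullet> x + \<rho> * t = 0)
    \<and> (\<rho>, v) \<noteq> (0, 0)"
  unfolding Lambda_def Zset_def by simp

lemma Lambda_scaleR:
  assumes "zb \<in> Lambda" "c \<noteq> 0"
  shows "c *\<^sub>R zb \<in> Lambda"
proof -
  obtain \<rho> v m \<sigma> p where zb: "zb = (\<rho>, v, m, \<sigma>, p)" by (cases zb)
  with assms(1) have L: "(\<rho>, v, m, \<sigma>, p) \<in> Lambda" by simp
  then have Z: "transpose \<sigma> = \<sigma>" "trace \<sigma> = 0" "(\<rho>, v) \<noteq> (0, 0)"
    by (simp_all add: Lambda_iff)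
  from L obtain x t where kernel: "(x, t) \<noteq> (0, 0)" "(\<sigma> + p *\<^sub>R mat 1) *v x + t *\<^sub>R v = 0"
    "v \<bullet> x = 0" "m \<bullet> x + \<rho> * t = 0"
    unfolding Lambda_iff by blast
  have "(c *\<^sub>R \<sigma> + (c * p) *\<^sub>R mat 1) *v x + t *\<^sub>R (c *\<^sub>R v)
      = c *\<^sub>R ((\<sigma> + p *\<^sub>R mat 1) *v x + t *\<^sub>R v)"
    by (simp add: algebra_simps scaleR_matrix_vector_assoc[symmetric])
  moreover have "(c *\<^sub>R m) \<bullet> x + (c * \<rho>) * t = c * (m \<bullet> x + \<rho> * t)" by (simp add: algebra_simps)
  moreover have "(c * \<rho>, c *\<^sub>R v) \<noteq> (0, 0)" using Z(3) assms(2) by simp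
  ultimately have "(c * \<rho>, c *\<^sub>R v, c *\<^sub>R m, c *\<^sub>R \<sigma>, c * p) \<in> Lambda"
    unfolding Lambda_iff using Z kernel
    by (intro conjI exI[of _ x] exI[of _ t]) (simp_all add: transpose_scalar trace_scaleR)
  then show ?thesis unfolding zb by simp
qed

lemma Lambda_reflect:
  assumes "(\<rho>, v, m, \<sigma>, p) \<in> Lambda"
  shows "(- \<rho>, - v, m, \<sigma>, p) \<in> Lambda"
proof -
  from assms obtain x t where "(x, t) \<noteq> (0, 0)" "(\<sigma> + p *\<^sub>R mat 1) *v x + t *\<^sub>R v = 0"
    "v \<bullet> x = 0" "m \<bullet> x + \<rho> * t = 0"
    unfolding Lambda_iff by blast
  with assms show ?thesis
    unfolding Lambda_iff by (intro conjI exI[of _ x] exI[of _ "- t"]) auto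
qed

text \<open>Moving \<open>m\<close> and \<open>v\<close> by \<open>w / 2\<close> changes \<open>(m + v) \<otimes> (m + v) / (2 s)\<close> to first order by
  the symmetric part below; the multiple of the defect matrix \<open>P\<close> makes the correction trace-free.\<close>
definition rank_one_correction :: "real^'n \<Rightarrow> real^'n \<Rightarrow> real \<Rightarrow> real^'n^'n \<Rightarrow> real^'n^'n" where
  "rank_one_correction a w s P =
     (1 / (2 * s)) *\<^sub>R (outer a w + outer w a) - (a \<bullet> w / (s * trace P)) *\<^sub>R P"

lemma symmetric_rank_one_correction:
  "transpose P = P \<Longrightarrow> transpose (rank_one_correction a w s P) = rank_one_correction a w s P"
  unfolding rank_one_correction_def
  by (simp add: transpose_add transpose_diff transpose_scalar transpose_outer add.commute)

lemma trace_rank_one_correction: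
  assumes "trace P \<noteq> 0" "s \<noteq> 0"
  shows "trace (rank_one_correction a w s P) = 0"
  unfolding rank_one_correction_def using assms
  by (simp add: trace_add trace_sub trace_scaleR trace_outer inner_commute[of w a] field_simps)

lemma quadratic_form_rank_one_correction:
  "\<xi> \<bullet> (rank_one_correction a w s P *v \<xi>)
    = (a \<bullet> \<xi>) * (w \<bullet> \<xi>) / s - (a \<bullet> w / (s * trace P)) * (\<xi> \<bullet> (P *v \<xi>))"
  unfolding rank_one_correction_def
  by (simp add: matrix_vector_mult_add_rdistrib matrix_vector_mult_diff_rdistrib inner_add_right
      inner_diff_right scaleR_matrix_vector_assoc[symmetric] outer_mult_vec inner_commute field_simps)

lemma rank_one_direction_in_Lambda:
  fixes P :: "real^'n::finite^'n"
  assumes sym: "transpose P = P" and "trace P \<noteq> 0" "s \<noteq> 0"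
    and x: "x \<noteq> 0" "P *v x = \<mu> *\<^sub>R x" and "u \<bullet> x = 0" "P *v u \<noteq> 0"
  defines "w \<equiv> P *v u"
  shows "(0, (1/2) *\<^sub>R w, (1/2) *\<^sub>R w, rank_one_correction a w s P, (a \<bullet> w / (s * trace P)) * \<mu>)
    \<in> Lambda"
proof -
  define \<kappa> where "\<kappa> = a \<bullet> w / (s * trace P)"
  have "w \<bullet> x = \<mu> * (u \<bullet> x)"
    unfolding w_def using symmetric_inner_mult_commute[OF sym, of x u] x(2) by (simp add: inner_commute)
  with \<open>u \<bullet> x = 0\<close> have wx: "w \<bullet> x = 0" by simp
  define t where "t = - (a \<bullet> x) / s"
  have "rank_one_correction a w s P *v x = ((a \<bullet> x) / (2 * s)) *\<^sub>R w - (\<kappa> * \<mu>) *\<^sub>R x"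
    unfolding rank_one_correction_def \<kappa>_def using x(2) wx
    by (simp add: matrix_vector_mult_add_rdistrib matrix_vector_mult_diff_rdistrib
        scaleR_matrix_vector_assoc[symmetric] outer_mult_vec inner_commute scaleR_add_right)
  then have "(rank_one_correction a w s P + (\<kappa> * \<mu>) *\<^sub>R mat 1) *v x + t *\<^sub>R ((1/2) *\<^sub>R w) = 0"
    using \<open>s \<noteq> 0\<close> unfolding t_def
    by (simp add: matrix_vector_mult_add_rdistrib scaleR_matrix_vector_assoc[symmetric]
        scaleR_add_left[symmetric])
  moreover have "w \<noteq> 0" using \<open>P *v u \<noteq> 0\<close> unfolding w_def .
  ultimately show ?thesis
    unfolding Lambda_iff \<kappa>_def[symmetric]
    using symmetric_rank_one_correction[OF sym] trace_rank_one_correction[OF assms(2,3)] x(1) wx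
    by (intro conjI exI[of _ x] exI[of _ t]) simp_all
qed

lemma quadratic_form_rank_one_perturbation:
  fixes e :: "real \<Rightarrow> real" and \<rho> p :: real and v m u :: "real^'n::finite" and \<sigma> :: "real^'n^'n"
  defines "P \<equiv> defect_matrix e (\<rho>, v, m, \<sigma>, p)"
  defines "w \<equiv> P *v u"
  assumes z: "(\<rho>, v, m, \<sigma>, p) \<in> Ubar e" and s: "1 + \<rho> > 0"
    and small_u: "u \<bullet> (P *v u) \<le> 1 + \<rho>"
    and small_coefficient: "\<bar>(m + v) \<bullet> w / ((1 + \<rho>) * trace P)\<bar> \<le> 1/2"
    and \<delta>: "\<delta> \<in> {1, -1}"
  shows "half_sq_div (1 + \<rho>) ((m + v + \<delta> *\<^sub>R w) \<bullet> \<xi>) + half_sq_div (1 - \<rho>) ((m - v) \<bullet> \<xi>)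
    \<le> e \<rho> * (\<xi> \<bullet> \<xi>) + \<xi> \<bullet> ((\<sigma> + \<delta> *\<^sub>R rank_one_correction (m + v) w (1 + \<rho>) P) *v \<xi>)"
proof -
  define q \<alpha> \<beta> \<kappa> where "q = \<xi> \<bullet> (P *v \<xi>)" and "\<alpha> = (m + v) \<bullet> \<xi>" and "\<beta> = w \<bullet> \<xi>"
    and "\<kappa> = - ((m + v) \<bullet> w / ((1 + \<rho>) * trace P))"
  from z have "transpose \<sigma> = \<sigma>" by (simp add: Ubar_iff)
  then have symP: "transpose P = P" unfolding P_def by (rule symmetric_defect_matrix)
  have psdP: "0 \<le> y \<bullet> (P *v y)" for y unfolding P_def by (rule defect_matrix_psd[OF z])
  have q: "q = e \<rho> * (\<xi> \<bullet> \<xi>) + \<xi> \<bullet> (\<sigma> *v \<xi>) - half_sq_div (1 + \<rho>) \<alpha>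
      - half_sq_div (1 - \<rho>) ((m - v) \<bullet> \<xi>)"
    unfolding q_def P_def \<alpha>_def by (rule quadratic_form_defect_matrix)
  have "\<beta>\<^sup>2 \<le> (u \<bullet> (P *v u)) * q"
    unfolding \<beta>_def w_def q_def inner_commute[of "P *v u"] by (rule psd_Cauchy_Schwarz[OF symP psdP])
  also have "\<dots> \<le> (1 + \<rho>) * q" using small_u psdP[of \<xi>] unfolding q_def by (rule mult_right_mono)
  finally have "(\<alpha> + \<delta> * \<beta>)\<^sup>2 / (2 * (1 + \<rho>))
      \<le> q + \<alpha>\<^sup>2 / (2 * (1 + \<rho>)) + \<delta> * (\<alpha> * \<beta> / (1 + \<rho>) + \<kappa> * q)"
    using small_coefficient psdP[of \<xi>] s \<delta>
    by (intro half_sq_perturbation_le) (simp_all add: q_def \<kappa>_def)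
  moreover have "\<xi> \<bullet> (rank_one_correction (m + v) w (1 + \<rho>) P *v \<xi>) = \<alpha> * \<beta> / (1 + \<rho>) + \<kappa> * q"
    unfolding quadratic_form_rank_one_correction \<alpha>_def \<beta>_def \<kappa>_def q_def by simp
  ultimately show ?thesis
    using q s unfolding half_sq_div_def \<alpha>_def \<beta>_def
    by (simp add: inner_add_left matrix_vector_mult_add_rdistrib scaleR_matrix_vector_assoc[symmetric]
        inner_add_right)
qed

lemma rank_one_perturbation_in_Ubar:
  fixes e :: "real \<Rightarrow> real" and \<rho> p :: real and v m u :: "real^'n::finite" and \<sigma> :: "real^'n^'n"
  defines "P \<equiv> defect_matrix e (\<rho>, v, m, \<sigma>, p)"
  defines "w \<equiv> P *v u"
  assumes z: "(\<rho>, v, m, \<sigma>, p) \<in> Ubar e" and s: "1 + \<rho> > 0" and "trace P \<noteq> 0"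
    and small_u: "u \<bullet> (P *v u) \<le> 1 + \<rho>"
    and small_coefficient: "\<bar>(m + v) \<bullet> w / ((1 + \<rho>) * trace P)\<bar> \<le> 1/2"
    and cone: "norm (m + v) + norm w \<le> sqrt (real CARD('n) * e 1) * (1 + \<rho>)"
    and \<delta>: "\<delta> \<in> {1, -1}"
  shows "(\<rho>, v, m, \<sigma>, p) + \<delta> *\<^sub>R (0, (1/2) *\<^sub>R w, (1/2) *\<^sub>R w, rank_one_correction (m + v) w (1 + \<rho>) P, pb)
    \<in> Ubar e"
proof -
  define C where "C = rank_one_correction (m + v) w (1 + \<rho>) P"
  from z have sym: "transpose \<sigma> = \<sigma>" and "trace \<sigma> = 0" "-1 \<le> \<rho>" "\<rho> \<le> 1"
    and cone_minus: "norm (m - v) \<le> sqrt (real CARD('n) * e (-1)) * (1 - \<rho>)"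
    by (simp_all add: Ubar_iff)
  have symP: "transpose P = P" unfolding P_def by (rule symmetric_defect_matrix[OF sym])
  have "(m + (\<delta> / 2) *\<^sub>R w) + (v + (\<delta> / 2) *\<^sub>R w) = m + v + (\<delta> / 2 + \<delta> / 2) *\<^sub>R w"
    by (simp only: scaleR_add_left ac_simps)
  then have sum: "(m + (\<delta> / 2) *\<^sub>R w) + (v + (\<delta> / 2) *\<^sub>R w) = m + v + \<delta> *\<^sub>R w"
    by (simp only: field_sum_of_halves)
  have diff: "(m + (\<delta> / 2) *\<^sub>R w) - (v + (\<delta> / 2) *\<^sub>R w) = m - v" by simp
  have "norm (m + v + \<delta> *\<^sub>R w) \<le> sqrt (real CARD('n) * e 1) * (1 + \<rho>)"
    using norm_triangle_ineq[of "m + v" "\<delta> *\<^sub>R w"] cone \<delta> by auto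
  moreover note quadratic_form_rank_one_perturbation[OF z s small_u[unfolded P_def]
      small_coefficient[unfolded w_def P_def] \<delta>, folded P_def w_def C_def]
  ultimately have "(\<rho>, v + (\<delta> / 2) *\<^sub>R w, m + (\<delta> / 2) *\<^sub>R w, \<sigma> + \<delta> *\<^sub>R C, p + \<delta> * pb) \<in> Ubar e"
    unfolding Ubar_iff sum diff
    using z sym \<open>trace \<sigma> = 0\<close> symmetric_rank_one_correction[OF symP]
      trace_rank_one_correction[OF \<open>trace P \<noteq> 0\<close>] s \<open>-1 \<le> \<rho>\<close> \<open>\<rho> \<le> 1\<close> cone_minus
    by (simp add: C_def transpose_add transpose_scalar trace_add trace_scaleR)
  then show ?thesis unfolding C_def by simp
qed

lemma Lambda_segment_centre_plus:
  fixes \<sigma> :: "real^'n::finite^'n"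
  assumes n2: "CARD('n) \<ge> 2" and z: "(\<rho>, v, m, \<sigma>, p) \<in> Ubar e" and s: "1 + \<rho> > 0"
    and strict: "norm (m + v) < sqrt (real CARD('n) * e 1) * (1 + \<rho>)"
    and "defect_matrix e (\<rho>, v, m, \<sigma>, p) \<noteq> 0"
  shows "Lambda_segment_centre (Ubar e) (\<rho>, v, m, \<sigma>, p)"
proof -
  define P where "P = defect_matrix e (\<rho>, v, m, \<sigma>, p)"
  from z have "transpose \<sigma> = \<sigma>" by (simp add: Ubar_iff)
  then have symP: "transpose P = P" unfolding P_def by (rule symmetric_defect_matrix)
  have psdP: "0 \<le> \<xi> \<bullet> (P *v \<xi>)" for \<xi> unfolding P_def by (rule defect_matrix_psd[OF z])
  have "P \<noteq> 0" using assms(5) unfolding P_def .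
  then have "trace P > 0" by (rule psd_trace_pos[OF symP psdP])
  obtain x \<mu> u0 where x: "x \<noteq> 0" "P *v x = \<mu> *\<^sub>R x" and u0: "u0 \<bullet> x = 0" "P *v u0 \<noteq> 0"
    using psd_eigenvector_with_orthogonal_nonkernel[OF n2 symP psdP \<open>P \<noteq> 0\<close>] by blast
  define d k0 q0 where "d = sqrt (real CARD('n) * e 1) * (1 + \<rho>) - norm (m + v)"
    and "k0 = (m + v) \<bullet> (P *v u0) / ((1 + \<rho>) * trace P)" and "q0 = u0 \<bullet> (P *v u0)"
  have "d > 0" using strict unfolding d_def by simp
  moreover have "q0 \<ge> 0" unfolding q0_def by (rule psdP)
  ultimately obtain \<epsilon> where \<epsilon>: "\<epsilon> > 0" "\<epsilon> * \<bar>norm (P *v u0)\<bar> \<le> d" "\<epsilon> * \<bar>k0\<bar> \<le> 1 / 2"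
    "\<epsilon> * (\<epsilon> * q0) \<le> 1 + \<rho>"
    using exists_small_scaling s by blast
  define u where "u = \<epsilon> *\<^sub>R u0"
  have Pu: "P *v u = \<epsilon> *\<^sub>R (P *v u0)" unfolding u_def by (simp add: matrix_vector_mult_scaleR)
  have cone: "norm (m + v) + norm (P *v u) \<le> sqrt (real CARD('n) * e 1) * (1 + \<rho>)"
    using \<epsilon>(1,2) unfolding Pu d_def by simp
  have small_coefficient: "\<bar>(m + v) \<bullet> (P *v u) / ((1 + \<rho>) * trace P)\<bar> \<le> 1 / 2"
    using \<epsilon>(1,3) unfolding Pu k0_def by (simp add: abs_mult)
  have small_u: "u \<bullet> (P *v u) \<le> 1 + \<rho>"
    using \<epsilon>(4) unfolding u_def q0_def by (simp add: matrix_vector_mult_scaleR)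
  define zb where "zb = (0::real, (1/2) *\<^sub>R (P *v u), (1/2) *\<^sub>R (P *v u),
    rank_one_correction (m + v) (P *v u) (1 + \<rho>) P, ((m + v) \<bullet> (P *v u) / ((1 + \<rho>) * trace P)) * \<mu>)"
  have "P *v u \<noteq> 0" using \<open>\<epsilon> > 0\<close> u0(2) unfolding Pu by simp
  have "u \<bullet> x = 0" unfolding u_def using u0(1) by simp
  have "zb \<in> Lambda"
    unfolding zb_def using \<open>trace P > 0\<close> s x \<open>u \<bullet> x = 0\<close> \<open>P *v u \<noteq> 0\<close>
    by (intro rank_one_direction_in_Lambda[OF symP]) auto
  moreover have "zb \<noteq> 0" using \<open>P *v u \<noteq> 0\<close> unfolding zb_def by (simp add: zero_prod_def)
  moreover have "(\<rho>, v, m, \<sigma>, p) + \<delta> *\<^sub>R zb \<in> Ubar e" if "\<delta> \<in> {1, -1}" for \<delta>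
    unfolding zb_def P_def
    by (rule rank_one_perturbation_in_Ubar)
      (use z s \<open>trace P > 0\<close> small_u small_coefficient cone that in \<open>simp_all add: P_def\<close>)
  from this[of 1] this[of "-1"] have "(\<rho>, v, m, \<sigma>, p) + zb \<in> Ubar e" "(\<rho>, v, m, \<sigma>, p) - zb \<in> Ubar e"
    by simp_all
  ultimately show ?thesis unfolding Lambda_segment_centre_def by blast
qed

lemma Ubar_reflect:
  "(- \<rho>, - v, m, \<sigma>, p) \<in> Ubar (\<lambda>r. e (- r)) \<longleftrightarrow> (\<rho>, v, m, \<sigma>, p) \<in> Ubar e"
  for \<sigma> :: "real^'n::finite^'n"
  unfolding Ubar_iff by (auto simp: add.commute)

lemma defect_matrix_reflect:
  "defect_matrix (\<lambda>r. e (- r)) (- \<rho>, - v, m, \<sigma>, p) = defect_matrix e (\<rho>, v, m, \<sigma>, p)"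
  unfolding defect_matrix_def by (simp add: diff_diff_eq add.commute)

text \<open>The symmetry \<open>(\<rho>, v) \<mapsto> (- \<rho>, - v)\<close> exchanges the two cones.\<close>
lemma Lambda_segment_centre_reflect:
  fixes \<sigma> :: "real^'n::finite^'n"
  assumes "Lambda_segment_centre (Ubar (\<lambda>r. e (- r))) (- \<rho>, - v, m, \<sigma>, p)"
  shows "Lambda_segment_centre (Ubar e) (\<rho>, v, m, \<sigma>, p)"
proof -
  obtain zb where zb: "zb \<in> Lambda - {0}" and
    "(- \<rho>, - v, m, \<sigma>, p) + zb \<in> Ubar (\<lambda>r. e (- r))" "(- \<rho>, - v, m, \<sigma>, p) - zb \<in> Ubar (\<lambda>r. e (- r))"
    using assms unfolding Lambda_segment_centre_def by blast
  moreover obtain \<rho>' v' m' \<sigma>' p' where zb_eq: "zb = (\<rho>', v', m', \<sigma>', p')" by (cases zb)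
  ultimately have "(- (\<rho> - \<rho>'), - (v - v'), m + m', \<sigma> + \<sigma>', p + p') \<in> Ubar (\<lambda>r. e (- r))"
    "(- (\<rho> + \<rho>'), - (v + v'), m - m', \<sigma> - \<sigma>', p - p') \<in> Ubar (\<lambda>r. e (- r))"
    by simp_all
  then have "(\<rho>, v, m, \<sigma>, p) + (- \<rho>', - v', m', \<sigma>', p') \<in> Ubar e"
    "(\<rho>, v, m, \<sigma>, p) - (- \<rho>', - v', m', \<sigma>', p') \<in> Ubar e"
    unfolding Ubar_reflect by simp_all
  moreover have "(- \<rho>', - v', m', \<sigma>', p') \<in> Lambda - {0}"
    using zb Lambda_reflect[of \<rho>' v' m' \<sigma>' p'] unfolding zb_eq by (auto simp: zero_prod_def)
  ultimately show ?thesis unfolding Lambda_segment_centre_def by blast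
qed

lemma Lambda_segment_centre_minus:
  fixes \<sigma> :: "real^'n::finite^'n"
  assumes n2: "CARD('n) \<ge> 2" and z: "(\<rho>, v, m, \<sigma>, p) \<in> Ubar e" and r: "1 - \<rho> > 0"
    and strict: "norm (m - v) < sqrt (real CARD('n) * e (-1)) * (1 - \<rho>)"
    and "defect_matrix e (\<rho>, v, m, \<sigma>, p) \<noteq> 0"
  shows "Lambda_segment_centre (Ubar e) (\<rho>, v, m, \<sigma>, p)"
proof (rule Lambda_segment_centre_reflect, rule Lambda_segment_centre_plus[OF n2])
  show "(- \<rho>, - v, m, \<sigma>, p) \<in> Ubar (\<lambda>r. e (- r))" using z by (simp add: Ubar_reflect)
  show "defect_matrix (\<lambda>r. e (- r)) (- \<rho>, - v, m, \<sigma>, p) \<noteq> 0"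
    using assms(5) by (simp add: defect_matrix_reflect)
qed (use r strict in simp_all)

text \<open>The direction along which \<open>\<rho>\<close> moves while \<open>(m + v) / (1 + \<rho>)\<close> and \<open>(m - v) / (1 - \<rho>)\<close>
  stay fixed; a vanishing defect matrix stays zero along it.\<close>
lemma radial_direction_in_Lambda:
  fixes a b :: "real^'n::finite"
  assumes n2: "CARD('n) \<ge> 2" and "s \<noteq> 0" "r \<noteq> 0"
    and tr: "(norm a)\<^sup>2 / (2 * s\<^sup>2) - (norm b)\<^sup>2 / (2 * r\<^sup>2) = real CARD('n) * E"
  shows "(1, (1/2) *\<^sub>R ((1 / s) *\<^sub>R a + (1 / r) *\<^sub>R b), (1/2) *\<^sub>R ((1 / s) *\<^sub>R a - (1 / r) *\<^sub>R b),
    (1 / (2 * s\<^sup>2)) *\<^sub>R outer a a - (1 / (2 * r\<^sup>2)) *\<^sub>R outer b b - E *\<^sub>R mat 1, E) \<in> Lambda"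
proof -
  define \<sigma> where "\<sigma> = (1 / (2 * s\<^sup>2)) *\<^sub>R outer a a - (1 / (2 * r\<^sup>2)) *\<^sub>R outer b b - E *\<^sub>R mat 1"
  obtain x where x: "x \<noteq> 0" "((1 / s) *\<^sub>R a + (1 / r) *\<^sub>R b) \<bullet> x = 0"
    using exists_orthogonal_nonzero[OF n2] by blast
  define A B where "A = a \<bullet> x" and "B = b \<bullet> x"
  have AB: "B / r = - A / s" using x(2) unfolding A_def B_def by (simp add: inner_add_left)
  define t where "t = - (A / s - B / r) / 2"
  have "(\<sigma> + E *\<^sub>R mat 1) *v x + t *\<^sub>R ((1/2) *\<^sub>R ((1 / s) *\<^sub>R a + (1 / r) *\<^sub>R b))
      = (A / (2 * s\<^sup>2) + t / (2 * s)) *\<^sub>R a + (t / (2 * r) - B / (2 * r\<^sup>2)) *\<^sub>R b"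
    unfolding \<sigma>_def A_def B_def
    by (simp add: matrix_vector_mult_add_rdistrib matrix_vector_mult_diff_rdistrib
        scaleR_matrix_vector_assoc[symmetric] outer_mult_vec inner_commute algebra_simps)
  moreover have "A / (2 * s\<^sup>2) + t / (2 * s) = 0" "t / (2 * r) - B / (2 * r\<^sup>2) = 0"
    using \<open>s \<noteq> 0\<close> \<open>r \<noteq> 0\<close> AB unfolding t_def by (simp_all add: field_simps power2_eq_square)
  ultimately have kernel: "(\<sigma> + E *\<^sub>R mat 1) *v x + t *\<^sub>R ((1/2) *\<^sub>R ((1 / s) *\<^sub>R a + (1 / r) *\<^sub>R b)) = 0"
    by simp
  have "(1/2) *\<^sub>R ((1 / s) *\<^sub>R a - (1 / r) *\<^sub>R b) \<bullet> x + 1 * t = 0"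
    unfolding t_def A_def B_def by (simp add: inner_diff_left add_divide_distrib[symmetric])
  moreover have "transpose \<sigma> = \<sigma>" unfolding \<sigma>_def
    by (simp add: transpose_diff transpose_scalar transpose_outer)
  moreover have "trace \<sigma> = 0"
    using tr unfolding \<sigma>_def by (simp add: trace_sub trace_scaleR trace_outer trace_I dot_square_norm)
  ultimately show ?thesis
    unfolding Lambda_iff \<sigma>_def[symmetric] using kernel x
    by (intro conjI exI[of _ x] exI[of _ t]) simp_all
qed

lemma Kset_if_defect_zero_at_boundary:
  fixes \<sigma> :: "real^'n::finite^'n"
  assumes z: "(\<rho>, v, m, \<sigma>, p) \<in> Ubar e" and \<rho>: "\<rho> = 1 \<or> \<rho> = -1"
    and D0: "defect_matrix e (\<rho>, v, m, \<sigma>, p) = 0"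
  shows "(\<rho>, v, m, \<sigma>, p) \<in> Kset e"
proof -
  from z have sym: "transpose \<sigma> = \<sigma>" and tr: "trace \<sigma> = 0" by (simp_all add: Ubar_iff)
  have "m = \<rho> *\<^sub>R v"
  proof (cases "\<rho> = 1")
    case True
    with z have "norm (m - v) \<le> 0" by (simp add: Ubar_iff)
    with True show ?thesis by simp
  next
    case False
    with \<rho> have "\<rho> = -1" by simp
    with z have "norm (m + v) \<le> 0" by (simp add: Ubar_iff)
    then show ?thesis unfolding \<open>\<rho> = -1\<close> by (simp add: eq_neg_iff_add_eq_0)
  qed
  moreover have "outer (v + v) (v + v) = 4 *\<^sub>R outer v v" "outer (- v - v) (- v - v) = 4 *\<^sub>R outer v v"
    by (simp_all add: vec_eq_iff outer_def algebra_simps)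
  ultimately have "e \<rho> *\<^sub>R mat 1 + \<sigma> - outer v v = 0"
    using D0 \<rho> unfolding defect_matrix_def by auto
  then have "outer v v - \<sigma> = e \<rho> *\<^sub>R mat 1" by (simp add: algebra_simps)
  with sym tr \<rho> \<open>m = \<rho> *\<^sub>R v\<close> show ?thesis unfolding Kset_def Zset_def by auto
qed

context affine_energy
begin

lemma defect_zero_trace_balance:
  fixes \<sigma> :: "real^'n::finite^'n"
  assumes z: "(\<rho>, v, m, \<sigma>, p) \<in> Ubar e" and "-1 < \<rho>" "\<rho> < 1"
    and D0: "defect_matrix e (\<rho>, v, m, \<sigma>, p) = 0"
  shows "(norm (m + v))\<^sup>2 / (2 * (1 + \<rho>)\<^sup>2) - (norm (m - v))\<^sup>2 / (2 * (1 - \<rho>)\<^sup>2)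
    = real CARD('n) * ((e 1 - e (-1)) / 2)"
proof -
  define N where "N = real CARD('n)"
  have s: "1 + \<rho> > 0" and r: "1 - \<rho> > 0" using assms(2,3) by simp_all
  from z have "trace \<sigma> = 0" and
    cones: "norm (m + v) \<le> sqrt (N * e 1) * (1 + \<rho>)" "norm (m - v) \<le> sqrt (N * e (-1)) * (1 - \<rho>)"
    by (simp_all add: Ubar_iff N_def)
  have "(norm (m + v))\<^sup>2 / (2 * (1 + \<rho>)) \<le> N * e 1 * (1 + \<rho>) / 2"
    by (rule sq_div_le_of_le_sqrt) (use s pos_plus cones in \<open>simp_all add: N_def\<close>)
  moreover have "(norm (m - v))\<^sup>2 / (2 * (1 - \<rho>)) \<le> N * e (-1) * (1 - \<rho>) / 2"
    by (rule sq_div_le_of_le_sqrt) (use r pos_minus cones in \<open>simp_all add: N_def\<close>)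
  moreover have "N * e \<rho> = N * e 1 * (1 + \<rho>) / 2 + N * e (-1) * (1 - \<rho>) / 2"
    unfolding e_interpolation[of \<rho>] by (simp add: algebra_simps)
  moreover have "N * e \<rho> = (norm (m + v))\<^sup>2 / (2 * (1 + \<rho>)) + (norm (m - v))\<^sup>2 / (2 * (1 - \<rho>))"
    using trace_defect_matrix[OF \<open>trace \<sigma> = 0\<close>, of e \<rho> v m p] s r
    unfolding D0 N_def half_sq_div_def by (simp add: trace_0[unfolded mat_0])
  ultimately have "(norm (m + v))\<^sup>2 / (2 * (1 + \<rho>)) = N * e 1 * (1 + \<rho>) / 2"
    "(norm (m - v))\<^sup>2 / (2 * (1 - \<rho>)) = N * e (-1) * (1 - \<rho>) / 2"
    by linarith+
  with s r have "(norm (m + v))\<^sup>2 = N * e 1 * (1 + \<rho>)\<^sup>2" "(norm (m - v))\<^sup>2 = N * e (-1) * (1 - \<rho>)\<^sup>2"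
    by (simp_all add: field_simps power2_eq_square)
  with s r show ?thesis unfolding N_def by (simp add: field_simps)
qed

lemma quadratic_form_radial_perturbation:
  fixes \<rho> :: real and v m :: "real^'n::finite" and \<sigma> :: "real^'n^'n"
  defines "a \<equiv> m + v" and "b \<equiv> m - v" and "s \<equiv> 1 + \<rho>" and "r \<equiv> 1 - \<rho>"
    and "E \<equiv> (e 1 - e (-1)) / 2"
  defines "\<sigma>b \<equiv> (1 / (2 * s\<^sup>2)) *\<^sub>R outer a a - (1 / (2 * r\<^sup>2)) *\<^sub>R outer b b - E *\<^sub>R mat 1"
  assumes "-1 < \<rho>" "\<rho> < 1" and D0: "defect_matrix e (\<rho>, v, m, \<sigma>, p) = 0"
    and \<delta>: "- s < \<delta>" "\<delta> < r"
  shows "half_sq_div (s + \<delta>) (((1 + \<delta> / s) *\<^sub>R a) \<bullet> \<xi>) + half_sq_div (r + - \<delta>) (((1 + (- \<delta>) / r) *\<^sub>R b) \<bullet> \<xi>)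
    = e (\<rho> + \<delta>) * (\<xi> \<bullet> \<xi>) + \<xi> \<bullet> ((\<sigma> + \<delta> *\<^sub>R \<sigma>b) *v \<xi>)"
proof -
  define \<alpha> \<beta> where "\<alpha> = a \<bullet> \<xi>" and "\<beta> = b \<bullet> \<xi>"
  have s: "s > 0" and r: "r > 0" using assms(7,8) unfolding s_def r_def by simp_all
  have q: "e \<rho> * (\<xi> \<bullet> \<xi>) + \<xi> \<bullet> (\<sigma> *v \<xi>) = \<alpha>\<^sup>2 / (2 * s) + \<beta>\<^sup>2 / (2 * r)"
    using quadratic_form_defect_matrix[of \<xi> e \<rho> v m \<sigma> p] s r
    unfolding D0 \<alpha>_def \<beta>_def a_def b_def s_def r_def half_sq_div_def by simp
  have qb: "\<xi> \<bullet> (\<sigma>b *v \<xi>) = \<alpha>\<^sup>2 / (2 * s\<^sup>2) - \<beta>\<^sup>2 / (2 * r\<^sup>2) - E * (\<xi> \<bullet> \<xi>)"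
    unfolding \<alpha>_def \<beta>_def \<sigma>b_def
    by (simp add: matrix_vector_mult_diff_rdistrib scaleR_matrix_vector_assoc[symmetric]
        inner_diff_right inner_outer_self)
  have split: "\<xi> \<bullet> ((\<sigma> + \<delta> *\<^sub>R \<sigma>b) *v \<xi>) = \<xi> \<bullet> (\<sigma> *v \<xi>) + \<delta> * (\<xi> \<bullet> (\<sigma>b *v \<xi>))"
    by (simp add: matrix_vector_mult_add_rdistrib scaleR_matrix_vector_assoc[symmetric] inner_add_right)
  have shift: "e (\<rho> + \<delta>) = e \<rho> + \<delta> * E" unfolding E_def using e_translated[of \<rho> \<delta>] by simp
  have "e (\<rho> + \<delta>) * (\<xi> \<bullet> \<xi>) + \<xi> \<bullet> ((\<sigma> + \<delta> *\<^sub>R \<sigma>b) *v \<xi>)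
      = (e \<rho> * (\<xi> \<bullet> \<xi>) + \<xi> \<bullet> (\<sigma> *v \<xi>)) + \<delta> * (E * (\<xi> \<bullet> \<xi>) + \<xi> \<bullet> (\<sigma>b *v \<xi>))"
    unfolding split shift by (simp add: algebra_simps)
  also have "\<dots> = \<alpha>\<^sup>2 / (2 * s) + \<beta>\<^sup>2 / (2 * r) + \<delta> * (\<alpha>\<^sup>2 / (2 * s\<^sup>2) - \<beta>\<^sup>2 / (2 * r\<^sup>2))"
    unfolding q qb by simp
  also have "\<dots> = (1 + \<delta> / s) * (\<alpha>\<^sup>2 / (2 * s)) + (1 + (- \<delta>) / r) * (\<beta>\<^sup>2 / (2 * r))"
    using s r by (simp add: field_simps power2_eq_square)
  finally show ?thesis
    using half_sq_div_rescale[of s \<delta> \<alpha>] half_sq_div_rescale[of r "- \<delta>" \<beta>] s r \<delta>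
    unfolding \<alpha>_def \<beta>_def by simp
qed

lemma radial_perturbation_in_Ubar:
  fixes \<rho> :: real and v m :: "real^'n::finite" and \<sigma> :: "real^'n^'n"
  defines "a \<equiv> m + v" and "b \<equiv> m - v" and "s \<equiv> 1 + \<rho>" and "r \<equiv> 1 - \<rho>"
    and "E \<equiv> (e 1 - e (-1)) / 2"
  defines "\<sigma>b \<equiv> (1 / (2 * s\<^sup>2)) *\<^sub>R outer a a - (1 / (2 * r\<^sup>2)) *\<^sub>R outer b b - E *\<^sub>R mat 1"
  assumes z: "(\<rho>, v, m, \<sigma>, p) \<in> Ubar e" and "-1 < \<rho>" "\<rho> < 1"
    and D0: "defect_matrix e (\<rho>, v, m, \<sigma>, p) = 0" and \<delta>: "- s < \<delta>" "\<delta> < r"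
  shows "(\<rho>, v, m, \<sigma>, p) + \<delta> *\<^sub>R (1, (1/2) *\<^sub>R ((1 / s) *\<^sub>R a + (1 / r) *\<^sub>R b),
      (1/2) *\<^sub>R ((1 / s) *\<^sub>R a - (1 / r) *\<^sub>R b), \<sigma>b, E) \<in> Ubar e"
    (is "_ + \<delta> *\<^sub>R (1, ?vb, ?mb, \<sigma>b, E) \<in> _")
proof -
  have s: "s > 0" and r: "r > 0" using assms(8,9) unfolding s_def r_def by simp_all
  from z have sym: "transpose \<sigma> = \<sigma>" and "trace \<sigma> = 0"
    and cones: "norm a \<le> sqrt (real CARD('n) * e 1) * s" "norm b \<le> sqrt (real CARD('n) * e (-1)) * r"
    by (simp_all add: Ubar_iff a_def b_def s_def r_def)
  have plus: "(m + \<delta> *\<^sub>R ?mb) + (v + \<delta> *\<^sub>R ?vb) = (1 + \<delta> / s) *\<^sub>R a"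
    and minus: "(m + \<delta> *\<^sub>R ?mb) - (v + \<delta> *\<^sub>R ?vb) = (1 + (- \<delta>) / r) *\<^sub>R b"
    using s r by (simp_all add: vec_eq_iff a_def b_def field_simps)
  have "norm ((1 + \<delta> / s) *\<^sub>R a) \<le> sqrt (real CARD('n) * e 1) * (s + \<delta>)"
    "norm ((1 + (- \<delta>) / r) *\<^sub>R b) \<le> sqrt (real CARD('n) * e (-1)) * (r + - \<delta>)"
    using cones s r \<delta> by (intro norm_scaleR_cone_le; simp)+
  moreover note quadratic_form_radial_perturbation[OF assms(8,9) D0 \<delta>[unfolded s_def r_def],
      folded a_def b_def s_def r_def E_def, folded \<sigma>b_def]
  moreover have "transpose \<sigma>b = \<sigma>b"
    unfolding \<sigma>b_def by (simp add: transpose_diff transpose_scalar transpose_outer)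
  moreover have "trace \<sigma>b = 0"
    using defect_zero_trace_balance[OF z assms(8,9) D0] unfolding \<sigma>b_def
    by (simp add: trace_sub trace_scaleR trace_outer trace_I dot_square_norm a_def b_def s_def r_def E_def)
  moreover have tuple: "(\<rho>, v, m, \<sigma>, p) + \<delta> *\<^sub>R (1, ?vb, ?mb, \<sigma>b, E)
      = (\<rho> + \<delta>, v + \<delta> *\<^sub>R ?vb, m + \<delta> *\<^sub>R ?mb, \<sigma> + \<delta> *\<^sub>R \<sigma>b, p + \<delta> * E)"
    by simp
  moreover have shifted: "1 + (\<rho> + \<delta>) = s + \<delta>" "1 - (\<rho> + \<delta>) = r + - \<delta>"
    unfolding s_def r_def by simp_all
  ultimately show ?thesis
    unfolding tuple Ubar_iff plus minus shifted
    using sym \<open>trace \<sigma> = 0\<close> s r \<delta> \<open>-1 < \<rho>\<close> \<open>\<rho> < 1\<close>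
    by (simp add: transpose_add transpose_scalar trace_add trace_scaleR s_def r_def)
qed

lemma Lambda_segment_centre_defect_zero:
  fixes \<sigma> :: "real^'n::finite^'n"
  assumes n2: "CARD('n) \<ge> 2" and z: "(\<rho>, v, m, \<sigma>, p) \<in> Ubar e" and "-1 < \<rho>" "\<rho> < 1"
    and D0: "defect_matrix e (\<rho>, v, m, \<sigma>, p) = 0"
  shows "Lambda_segment_centre (Ubar e) (\<rho>, v, m, \<sigma>, p)"
proof -
  define s r E where "s = 1 + \<rho>" and "r = 1 - \<rho>" and "E = (e 1 - e (-1)) / 2"
  define zb where "zb = (1::real, (1/2) *\<^sub>R ((1 / s) *\<^sub>R (m + v) + (1 / r) *\<^sub>R (m - v)),
    (1/2) *\<^sub>R ((1 / s) *\<^sub>R (m + v) - (1 / r) *\<^sub>R (m - v)),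
    (1 / (2 * s\<^sup>2)) *\<^sub>R outer (m + v) (m + v) - (1 / (2 * r\<^sup>2)) *\<^sub>R outer (m - v) (m - v) - E *\<^sub>R mat 1,
    E)"
  define \<epsilon> where "\<epsilon> = min s r / 2"
  have "s > 0" "r > 0" using assms(3,4) unfolding s_def r_def by simp_all
  then have \<epsilon>: "0 < \<epsilon>" "\<epsilon> < s" "\<epsilon> < r" unfolding \<epsilon>_def by simp_all
  have "zb \<in> Lambda"
    unfolding zb_def using defect_zero_trace_balance[OF z assms(3,4) D0] \<open>s > 0\<close> \<open>r > 0\<close>
    by (intro radial_direction_in_Lambda[OF n2]) (simp_all add: s_def r_def E_def)
  then have "\<epsilon> *\<^sub>R zb \<in> Lambda - {0}"
    using Lambda_scaleR[of zb \<epsilon>] \<epsilon> unfolding zb_def by (simp add: zero_prod_def)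
  moreover have "(\<rho>, v, m, \<sigma>, p) + \<delta> *\<^sub>R zb \<in> Ubar e" if "- s < \<delta>" "\<delta> < r" for \<delta>
    unfolding zb_def s_def r_def E_def
    by (rule radial_perturbation_in_Ubar[OF z assms(3,4) D0]) (use that in \<open>simp_all add: s_def r_def\<close>)
  from this[of \<epsilon>] this[of "- \<epsilon>"] \<epsilon>
  have "(\<rho>, v, m, \<sigma>, p) + \<epsilon> *\<^sub>R zb \<in> Ubar e" "(\<rho>, v, m, \<sigma>, p) - \<epsilon> *\<^sub>R zb \<in> Ubar e"
    by simp_all
  ultimately show ?thesis unfolding Lambda_segment_centre_def by blast
qed

lemma strict_cone_if_trace_defect_pos:
  fixes \<sigma> :: "real^'n::finite^'n"
  assumes z: "(\<rho>, v, m, \<sigma>, p) \<in> Ubar e" and pos: "trace (defect_matrix e (\<rho>, v, m, \<sigma>, p)) > 0"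
  shows "1 + \<rho> > 0 \<and> norm (m + v) < sqrt (real CARD('n) * e 1) * (1 + \<rho>)
    \<or> 1 - \<rho> > 0 \<and> norm (m - v) < sqrt (real CARD('n) * e (-1)) * (1 - \<rho>)"
proof -
  define N where "N = real CARD('n)"
  from z have "trace \<sigma> = 0" "-1 \<le> \<rho>" "\<rho> \<le> 1" by (simp_all add: Ubar_iff)
  have "N * e \<rho> = N * e 1 * (1 + \<rho>) / 2 + N * e (-1) * (1 - \<rho>) / 2"
    unfolding e_interpolation[of \<rho>] by (simp add: algebra_simps)
  with pos trace_defect_matrix[OF \<open>trace \<sigma> = 0\<close>, of e \<rho> v m p]
  have "half_sq_div (1 + \<rho>) (norm (m + v)) < N * e 1 * (1 + \<rho>) / 2
    \<or> half_sq_div (1 - \<rho>) (norm (m - v)) < N * e (-1) * (1 - \<rho>) / 2"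
    unfolding N_def by linarith
  then show ?thesis
  proof
    assume less: "half_sq_div (1 + \<rho>) (norm (m + v)) < N * e 1 * (1 + \<rho>) / 2"
    then have "1 + \<rho> > 0" using \<open>-1 \<le> \<rho>\<close> by (cases "\<rho> = -1") (auto simp: half_sq_div_def)
    with less have "norm (m + v) < sqrt (N * e 1) * (1 + \<rho>)"
      by (intro less_sqrt_of_sq_div_less) (simp_all add: half_sq_div_def)
    with \<open>1 + \<rho> > 0\<close> show ?thesis unfolding N_def by simp
  next
    assume less: "half_sq_div (1 - \<rho>) (norm (m - v)) < N * e (-1) * (1 - \<rho>) / 2"
    then have "1 - \<rho> > 0" using \<open>\<rho> \<le> 1\<close> by (cases "\<rho> = 1") (auto simp: half_sq_div_def)
    with less have "norm (m - v) < sqrt (N * e (-1)) * (1 - \<rho>)"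
      by (intro less_sqrt_of_sq_div_less) (simp_all add: half_sq_div_def)
    with \<open>1 - \<rho> > 0\<close> show ?thesis unfolding N_def by simp
  qed
qed

lemma Ubar_minus_Kset_Lambda_segment_centre:
  assumes n2: "CARD('n::finite) \<ge> 2" and "z \<in> (Ubar e :: 'n state set)" "z \<notin> Kset e"
  shows "Lambda_segment_centre (Ubar e) z"
proof -
  obtain \<rho> v m \<sigma> p where z_eq: "z = (\<rho>, v, m, \<sigma>, p)" by (cases z)
  with assms have z: "(\<rho>, v, m, \<sigma>, p) \<in> Ubar e" and notK: "(\<rho>, v, m, \<sigma>, p) \<notin> Kset e" by simp_all
  from z have sym: "transpose \<sigma> = \<sigma>" and "-1 \<le> \<rho>" "\<rho> \<le> 1" by (simp_all add: Ubar_iff)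
  show ?thesis
  proof (cases "defect_matrix e (\<rho>, v, m, \<sigma>, p) = 0")
    case True
    with z notK Kset_if_defect_zero_at_boundary have "\<rho> \<noteq> 1" "\<rho> \<noteq> -1" by blast+
    with \<open>-1 \<le> \<rho>\<close> \<open>\<rho> \<le> 1\<close> have "-1 < \<rho>" "\<rho> < 1" by simp_all
    with True show ?thesis unfolding z_eq by (intro Lambda_segment_centre_defect_zero[OF n2 z])
  next
    case False
    have "trace (defect_matrix e (\<rho>, v, m, \<sigma>, p)) > 0"
      by (rule psd_trace_pos[OF symmetric_defect_matrix[OF sym] defect_matrix_psd[OF z] False])
    with z False show ?thesis unfolding z_eq
      using strict_cone_if_trace_defect_pos Lambda_segment_centre_plus[OF n2]
        Lambda_segment_centre_minus[OF n2] by blast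
  qed
qed

end

theorem lemma3p11:
  fixes e :: "real \<Rightarrow> real"
  assumes n2: "CARD('n::finite) \<ge> 2"
    and affine: "\<exists>a b. \<forall>r. e r = a * r + b"
    and pos1: "e 1 > 0" and posm1: "e (-1) > 0"
  shows "bounded (proj ` (Uset e :: 'n state set))
    \<and> (\<forall>z \<in> closure (Uset e :: 'n state set) - Kset e.
          \<exists>zb \<in> Lambda - {0}. z + zb \<in> closure (Uset e) \<and> z - zb \<in> closure (Uset e))"
proof
  interpret affine_energy e by (rule affine_energy.intro[OF affine pos1 posm1])
  show "bounded (proj ` (Uset e :: 'n state set))"
    using bounded_proj_Ubar by (rule bounded_subset) (intro image_mono Uset_subset_Ubar)
  show "\<forall>z \<in> closure (Uset e :: 'n state set) - Kset e.
          \<exists>zb \<in> Lambda - {0}. z + zb \<in> closure (Uset e) \<and> z - zb \<in> closure (Uset e)"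
    using Ubar_minus_Kset_Lambda_segment_centre[OF n2]
    unfolding closure_Uset Lambda_segment_centre_def by blast
qed

end
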